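(* Let $m\geq 2$, $\mathbf{r}=(r_1,\ldots,r_m)\in(0,+\infty)^m$, and $1<p_m\leq 2<p_1,\ldots,p_{m-1}$ with $\frac{1}{p_1}+\cdots+\frac{1}{p_m}<1$. Then there exists $D^{\mathbb{K}}_{m,\mathbf{p},\mathbf{r}}\geq1$ such that for all positive integers $n_1,\ldots,n_m$ and every bounded $m$-linear form $T:\ell_{p_1}\times\cdots\times\ell_{p_m}\to\mathbb{K}$, $$\left(\sum_{i_1=1}^{n_1}\left(\cdots\left(\sum_{i_m=1}^{n_m}|T(e_{i_1},\ldots,e_{i_m})|^{r_m}\right)^{\frac{r_{m-1}}{r_m}}\cdots\right)^{\frac{r_1}{r_2}}\right)^{\frac{1}{r_1}}\leq D^{\mathbb{K}}_{m,\mathbf{p},\mathbf{r}}\,\|T\|\prod_{k=1}^m n_k^{\max\left\{\frac{1}{r_k}-\frac{1}{\delta^{p_k,\ldots,p_m}_{m-k+1}},\,0\right\}}.$$ Moreover, the exponent $\max\left\{\frac{1}{r_m}-\frac{1}{\delta_1^{p_m}},0\right\}$ of $n_m$ is optimal, and for each $k=1,\ldots,m-1$ the exponent $\max\left\{\frac{1}{r_k}-\frac{1}{\delta^{p_k,\ldots,p_m}_{m-k+1}},0\right\}$ of $n_k$ is optimal provided $r_j\geq\delta^{p_j,\ldots,p_m}_{m-j+1}$ for all $k+1\leq j\leq m$ (optimal meaning it cannot be replaced by a smaller exponent, the other exponents being kept, whatever the constant).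
   Context: $\mathbb{K}=\mathbb{R}$ or $\mathbb{C}$; $\ell_p$ is the usual sequence space, $e_j$ the canonical unit vectors, and $\|T\|=\sup\{|T(x^{(1)},\ldots,x^{(m)})|:\|x^{(j)}\|_{p_j}\le1\}$. For $k=1,\ldots,m$, $\delta^{p_k,\ldots,p_m}_{m-k+1}:=\left(1-\left(\frac{1}{p_k}+\cdots+\frac{1}{p_m}\right)\right)^{-1}$. *)

theory Defs
  imports "HOL-Analysis.Analysis"
begin

text \<open>Conventions: indices are 0-based. The m arguments of an m-linear form are
 indexed by j < m; the coordinates of sequences in l_p are indexed by nat (from 0).\<close>

definition lp_mem :: "real \<Rightarrow> (nat \<Rightarrow> 'k::real_normed_field) \<Rightarrow> bool" where
  "lp_mem p x \<longleftrightarrow> summable (\<lambda>t. norm (x t) powr p)"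

definition lp_norm :: "real \<Rightarrow> (nat \<Rightarrow> 'k::real_normed_field) \<Rightarrow> real" where
  "lp_norm p x = (\<Sum>t. norm (x t) powr p) powr (1 / p)"

definition unit_vec :: "nat \<Rightarrow> nat \<Rightarrow> 'k::real_normed_field" where
  "unit_vec i = (\<lambda>t. if t = i then 1 else 0)"

text \<open>Domain of an m-linear form on l_{p_0} x ... x l_{p_{m-1}}: families of sequences,
  the j-th in l_{p_j} for j < m, and (canonically) zero for j \<ge> m.\<close>
definition multi_dom :: "nat \<Rightarrow> (nat \<Rightarrow> real) \<Rightarrow> (nat \<Rightarrow> nat \<Rightarrow> 'k::real_normed_field) set" where
  "multi_dom m p = {x. (\<forall>j<m. lp_mem (p j) (x j)) \<and> (\<forall>j. m \<le> j \<longrightarrow> x j = (\<lambda>_. 0))}"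

definition multilinear_form ::
  "nat \<Rightarrow> (nat \<Rightarrow> real) \<Rightarrow> ((nat \<Rightarrow> nat \<Rightarrow> 'k::real_normed_field) \<Rightarrow> 'k) \<Rightarrow> bool" where
  "multilinear_form m p T \<longleftrightarrow>
     (\<forall>x\<in>multi_dom m p. \<forall>j<m. \<forall>y. lp_mem (p j) y \<longrightarrow>
        T (x(j := (\<lambda>t. x j t + y t))) = T x + T (x(j := y))) \<and>
     (\<forall>x\<in>multi_dom m p. \<forall>j<m. \<forall>c. T (x(j := (\<lambda>t. c * x j t))) = c * T x)"

definition bounded_multilinear_form ::
  "nat \<Rightarrow> (nat \<Rightarrow> real) \<Rightarrow> ((nat \<Rightarrow> nat \<Rightarrow> 'k::real_normed_field) \<Rightarrow> 'k) \<Rightarrow> bool" where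
  "bounded_multilinear_form m p T \<longleftrightarrow> multilinear_form m p T \<and>
     (\<exists>C. \<forall>x\<in>multi_dom m p. norm (T x) \<le> C * (\<Prod>j<m. lp_norm (p j) (x j)))"

definition form_norm ::
  "nat \<Rightarrow> (nat \<Rightarrow> real) \<Rightarrow> ((nat \<Rightarrow> nat \<Rightarrow> 'k::real_normed_field) \<Rightarrow> 'k) \<Rightarrow> real" where
  "form_norm m p T = (SUP x\<in>{x\<in>multi_dom m p. \<forall>j<m. lp_norm (p j) (x j) \<le> 1}. norm (T x))"

text \<open>Iterated mixed sum: mixed_norm r n a k j idx, with k levels remaining starting at
  level j; at level j sum over i < n j of (next level)^(r j), then take power 1/(r j).
  mixed_norm r n a m 0 idx0 is the left-hand side of the mixed (r_1,...,r_m) inequality.\<close>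
primrec mixed_norm ::
  "(nat \<Rightarrow> real) \<Rightarrow> (nat \<Rightarrow> nat) \<Rightarrow> ((nat \<Rightarrow> nat) \<Rightarrow> real) \<Rightarrow> nat \<Rightarrow> nat \<Rightarrow> (nat \<Rightarrow> nat) \<Rightarrow> real" where
  "mixed_norm r n a 0 j idx = a idx"
| "mixed_norm r n a (Suc k) j idx =
     (\<Sum>i<n j. (mixed_norm r n a k (Suc j) (idx(j := i))) powr (r j)) powr (1 / r j)"

text \<open>delta^{p_k,...,p_m}_{m-k+1} (0-based: k, ..., m-1)\<close>
definition hb_delta :: "(nat \<Rightarrow> real) \<Rightarrow> nat \<Rightarrow> nat \<Rightarrow> real" where
  "hb_delta p k m = 1 / (1 - (\<Sum>j\<in>{k..<m}. 1 / p j))"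

definition hb_exp :: "(nat \<Rightarrow> real) \<Rightarrow> (nat \<Rightarrow> real) \<Rightarrow> nat \<Rightarrow> nat \<Rightarrow> real" where
  "hb_exp p r m k = max (1 / r k - 1 / hb_delta p k m) 0"

definition unit_args :: "nat \<Rightarrow> (nat \<Rightarrow> nat) \<Rightarrow> nat \<Rightarrow> nat \<Rightarrow> 'k::real_normed_field" where
  "unit_args m idx = (\<lambda>j. if j < m then unit_vec (idx j) else (\<lambda>_. 0))"

definition HB_ineq :: "'k::real_normed_field itself \<Rightarrow> nat \<Rightarrow> (nat \<Rightarrow> real) \<Rightarrow> (nat \<Rightarrow> real)
    \<Rightarrow> real \<Rightarrow> (nat \<Rightarrow> real) \<Rightarrow> bool" where
  "HB_ineq K m p r D s \<longleftrightarrow>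
    (\<forall>n::nat \<Rightarrow> nat. (\<forall>k<m. 1 \<le> n k) \<longrightarrow>
      (\<forall>T :: (nat \<Rightarrow> nat \<Rightarrow> 'k) \<Rightarrow> 'k. bounded_multilinear_form m p T \<longrightarrow>
         mixed_norm r n (\<lambda>idx. norm (T (unit_args m idx))) m 0 (\<lambda>_. 0)
           \<le> D * form_norm m p T * (\<Prod>k<m. real (n k) powr s k)))"

end

theory Submission
  imports Defs
begin

text \<open>Let \<open>\<delta>\<^sub>k = \<delta>\<^bsup>p\<^sub>k,\<dots>,p\<^sub>m\<^esup>\<close>, so that \<open>1/\<delta>\<^sub>k = 1/\<delta>\<^sub>k\<^sub>+\<^sub>1 - 1/p\<^sub>k\<close> and all
  \<open>\<delta>\<^sub>k \<ge> 2\<close> because \<open>p\<^sub>m \<le> 2\<close>.  The mixed \<open>(\<delta>\<^sub>1,\<dots>,\<delta>\<^sub>m)\<close> inequality with constant 1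
  is proved for \<open>T\<close> with its first \<open>k\<close> arguments frozen, by downward induction on \<open>k\<close>.  In
  the step one tests the tail norms against the unit ball of \<open>\<ell>\<^bsub>p\<^sub>k\<^esub>\<close>: for the last argument
  by choosing phases, for the others by choosing signs through the cotype 2 inequality of the
  remaining mixed norm (exponents in \<open>[2,\<delta>\<^sub>k\<^sub>+\<^sub>1]\<close>, scalars in an inner product space); duality
  and the recursion for \<open>\<delta>\<close> give the \<open>\<ell>\<^bsub>\<delta>\<^sub>k\<^esub>\<close> bound.  Power means then trade \<open>\<delta>\<^sub>k\<close> for
  \<open>r\<^sub>k\<close> at the cost \<open>n\<^sub>k\<^bsup>max(1/r\<^sub>k - 1/\<delta>\<^sub>k, 0)\<^esup>\<close>.

  For optimality, the form \<open>\<Sum>\<^sub>i\<^sub><\<^sub>M x\<^sub>1(1)\<cdots>x\<^sub>k\<^sub>-\<^sub>1(1) x\<^sub>k(i)\<cdots>x\<^sub>m(i)\<close> has norm at most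
  \<open>M\<^bsup>1/\<delta>\<^sub>k\<^esup>\<close> by Hoelder's inequality, while its mixed norm with \<open>n\<^sub>j = 1\<close> for \<open>j < k\<close> and
  \<open>n\<^sub>j = N \<ge> M\<close> otherwise is at least \<open>M\<^bsup>1/r\<^sub>k\<^esup>\<close>; when \<open>r\<^sub>j \<ge> \<delta>\<^sub>j\<close> for \<open>j > k\<close> only the exponent
  of \<open>n\<^sub>k\<close> survives, and \<open>M = N \<rightarrow> \<infinity>\<close> (or \<open>M = 1\<close>) defeats any smaller exponent.\<close>

section \<open>Inequalities for finite sums of powers\<close>

lemma powr_powr_inverse: "0 < r \<Longrightarrow> ((x::real) powr r) powr (1/r) = \<bar>x\<bar>"
  by (simp add: powr_powr)

lemma powr_le_cancel_base:
  fixes x y r :: real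
  assumes "0 < r" "0 \<le> x" "0 \<le> y" "x powr r \<le> y powr r"
  shows "x \<le> y"
proof -
  have "(x powr r) powr (1/r) \<le> (y powr r) powr (1/r)"
    using assms by (rule_tac powr_mono2) auto
  moreover have "(x powr r) powr (1/r) = x" "(y powr r) powr (1/r) = y"
    using assms powr_powr_inverse[of r] by auto
  ultimately show ?thesis by simp
qed

lemma convex_on_powr_nonneg:
  assumes "1 \<le> (p::real)"
  shows "convex_on {0..} (\<lambda>x::real. x powr p)"
proof (rule convex_onI)
  fix t x y :: real assume t: "0 < t" "t < 1" and xy: "x \<in> {0..}" "y \<in> {0..}"
  have tp: "t powr p \<le> t" "(1-t) powr p \<le> 1 - t"
    using powr_mono'[of 1 p t] powr_mono'[of 1 p "1-t"] t assms by auto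
  consider "x = 0" | "y = 0" | "x \<in> {0<..}" "y \<in> {0<..}" using xy by fastforce
  then show "((1 - t) *\<^sub>R x + t *\<^sub>R y) powr p \<le> (1 - t) * x powr p + t * y powr p"
  proof cases
    case 1
    then show ?thesis using tp by (simp add: powr_mult mult_right_mono)
  next
    case 2
    then show ?thesis using tp by (simp add: powr_mult mult_right_mono)
  next
    case 3
    then show ?thesis using convex_onD[OF powr_convex[OF assms], of t x y] t by simp
  qed
qed simp

lemma sum_powr_eq_0_iff:
  fixes f :: "'a \<Rightarrow> real"
  assumes "finite S" "\<forall>i\<in>S. 0 \<le> f i"
  shows "(\<Sum>i\<in>S. f i powr p) = 0 \<longleftrightarrow> (\<forall>i\<in>S. f i = 0)"
  using assms by (simp add: sum_nonneg_eq_0_iff)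

lemma minkowski_inequality:
  fixes f g :: "'a \<Rightarrow> real"
  assumes S: "finite S" and p: "1 \<le> p" and f: "\<forall>i\<in>S. 0 \<le> f i" and g: "\<forall>i\<in>S. 0 \<le> g i"
  shows "(\<Sum>i\<in>S. (f i + g i) powr p) powr (1/p)
           \<le> (\<Sum>i\<in>S. f i powr p) powr (1/p) + (\<Sum>i\<in>S. g i powr p) powr (1/p)"
proof -
  define X where "X = (\<Sum>i\<in>S. f i powr p)"
  define Y where "Y = (\<Sum>i\<in>S. g i powr p)"
  define A where "A = X powr (1/p)"
  define B where "B = Y powr (1/p)"
  have X0: "X \<ge> 0" "Y \<ge> 0" unfolding X_def Y_def by (auto intro: sum_nonneg)
  have AX: "A powr p = X" "B powr p = Y" unfolding A_def B_def using X0 p by (auto simp: powr_powr)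
  show ?thesis
  proof (cases "X = 0 \<or> Y = 0")
    case True
    then have "(\<forall>i\<in>S. f i = 0) \<or> (\<forall>i\<in>S. g i = 0)"
      using sum_powr_eq_0_iff[OF S f] sum_powr_eq_0_iff[OF S g] unfolding X_def Y_def by blast
    then show ?thesis by (auto simp: X_def Y_def)
  next
    case False
    then have XY: "X > 0" "Y > 0" using X0 by auto
    then have AB: "A > 0" "B > 0" unfolding A_def B_def by auto
    define t where "t = B / (A + B)"
    have t: "0 \<le> t" "t \<le> 1" "1 - t = A / (A + B)" using AB unfolding t_def by (auto simp: field_simps)
    \<comment> \<open>convexity applied to the normalised vectors \<open>f/A\<close> and \<open>g/B\<close>\<close>
    have pt: "((f i + g i) / (A + B)) powr p \<le> (1 - t) * (f i / A) powr p + t * (g i / B) powr p"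
      if i: "i \<in> S" for i
    proof -
      have "(1 - t) * (f i / A) = f i / (A + B)" "t * (g i / B) = g i / (A + B)"
        using AB t(3) unfolding t_def by (auto simp: field_simps)
      then have "(f i + g i) / (A + B) = (1 - t) *\<^sub>R (f i / A) + t *\<^sub>R (g i / B)"
        by (simp add: add_divide_distrib)
      moreover have "f i / A \<in> {0..}" "g i / B \<in> {0..}" using f g i AB by auto
      ultimately show ?thesis
        using convex_onD[OF convex_on_powr_nonneg[OF p], of t "f i / A" "g i / B"] t by simp
    qed
    have "(\<Sum>i\<in>S. (f i + g i) powr p) / (A + B) powr p = (\<Sum>i\<in>S. ((f i + g i) / (A + B)) powr p)"
      by (simp add: powr_divide sum_divide_distrib)
    also have "\<dots> \<le> (\<Sum>i\<in>S. (1 - t) * (f i / A) powr p + t * (g i / B) powr p)"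
      using pt by (rule sum_mono)
    also have "\<dots> = (1 - t) * (X / A powr p) + t * (Y / B powr p)"
      unfolding X_def Y_def by (simp add: sum.distrib sum_distrib_left powr_divide sum_divide_distrib)
    also have "\<dots> = 1" using AX XY by simp
    finally have "(\<Sum>i\<in>S. (f i + g i) powr p) \<le> (A + B) powr p"
      using AB by (simp add: divide_le_eq)
    then have "(\<Sum>i\<in>S. (f i + g i) powr p) powr (1/p) \<le> ((A + B) powr p) powr (1/p)"
      using p by (intro powr_mono2) (auto intro: sum_nonneg)
    also have "\<dots> = A + B" using AB p by (simp add: powr_powr)
    finally show ?thesis unfolding A_def B_def X_def Y_def .
  qed
qed

lemma minkowski_inequality_sum:
  fixes g :: "'a \<Rightarrow> 'b \<Rightarrow> real"
  assumes S: "finite S" and L: "finite L" and p: "1 \<le> p" and g: "\<forall>i\<in>S. \<forall>l\<in>L. 0 \<le> g i l"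
  shows "(\<Sum>i\<in>S. (\<Sum>l\<in>L. g i l) powr p) powr (1/p) \<le> (\<Sum>l\<in>L. (\<Sum>i\<in>S. g i l powr p) powr (1/p))"
  using L g
proof (induction L rule: finite_induct)
  case (insert a L)
  have "(\<Sum>i\<in>S. (\<Sum>l\<in>insert a L. g i l) powr p) powr (1/p)
      = (\<Sum>i\<in>S. (g i a + (\<Sum>l\<in>L. g i l)) powr p) powr (1/p)"
    using insert by simp
  also have "\<dots> \<le> (\<Sum>i\<in>S. g i a powr p) powr (1/p) + (\<Sum>i\<in>S. (\<Sum>l\<in>L. g i l) powr p) powr (1/p)"
    using insert by (intro minkowski_inequality[OF S p]) (auto intro: sum_nonneg)
  also have "\<dots> \<le> (\<Sum>l\<in>insert a L. (\<Sum>i\<in>S. g i l powr p) powr (1/p))"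
    using insert by simp
  finally show ?case .
qed simp

lemma sum_powr_root_antimono:
  fixes a :: "'a \<Rightarrow> real"
  assumes S: "finite S" and rs: "0 < r" "r \<le> s" and a: "\<forall>i\<in>S. 0 \<le> a i"
  shows "(\<Sum>i\<in>S. a i powr s) powr (1/s) \<le> (\<Sum>i\<in>S. a i powr r) powr (1/r)"
proof -
  define A where "A = (\<Sum>i\<in>S. a i powr r) powr (1/r)"
  have sum_r: "(\<Sum>i\<in>S. a i powr r) = A powr r"
    unfolding A_def using rs by (simp add: powr_powr sum_nonneg)
  show ?thesis
  proof (cases "A = 0")
    case True
    then have "\<forall>i\<in>S. a i = 0" using sum_r rs sum_powr_eq_0_iff[OF S a] by simp
    then show ?thesis by simp
  next
    case False
    then have A0: "A > 0" unfolding A_def by simp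
    have aA: "a i \<le> A" if "i \<in> S" for i
    proof (rule powr_le_cancel_base[OF rs(1)])
      have "a i powr r \<le> (\<Sum>i\<in>S. a i powr r)"
        using that S by (intro member_le_sum) auto
      then show "a i powr r \<le> A powr r" by (simp only: sum_r)
    qed (use a that A0 in auto)
    \<comment> \<open>after normalisation all terms are at most 1, so raising to the larger power shrinks them\<close>
    have "(\<Sum>i\<in>S. a i powr s) / A powr s = (\<Sum>i\<in>S. (a i / A) powr s)"
      by (simp add: powr_divide sum_divide_distrib)
    also have "\<dots> \<le> (\<Sum>i\<in>S. (a i / A) powr r)"
      using aA a A0 rs by (intro sum_mono powr_mono') auto
    also have "\<dots> = (\<Sum>i\<in>S. a i powr r) / A powr r"
      by (simp add: powr_divide sum_divide_distrib)
    also have "\<dots> = 1" using A0 by (simp only: sum_r) simp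
    finally have "(\<Sum>i\<in>S. a i powr s) \<le> A powr s" using A0 by (simp add: divide_le_eq)
    then have "(\<Sum>i\<in>S. a i powr s) powr (1/s) \<le> (A powr s) powr (1/s)"
      using rs by (intro powr_mono2) (auto intro: sum_nonneg)
    also have "\<dots> = A" using A0 rs by (simp add: powr_powr_inverse)
    finally show ?thesis unfolding A_def .
  qed
qed

lemma power_mean_inequality:
  fixes a :: "'a \<Rightarrow> real"
  assumes S: "finite S" "S \<noteq> {}" and rd: "0 < r" "r \<le> d" and a: "\<forall>i\<in>S. 0 \<le> a i"
  shows "(\<Sum>i\<in>S. a i powr r) powr (1/r)
           \<le> real (card S) powr (1/r - 1/d) * (\<Sum>i\<in>S. a i powr d) powr (1/d)"
proof -
  define n where "n = real (card S)"
  have n: "n > 0" unfolding n_def using S by (simp add: card_gt_0_iff)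
  have "((\<Sum>i\<in>S. a i powr r) / n) powr (d/r) = (\<Sum>i\<in>S. (1/n) *\<^sub>R (a i powr r)) powr (d/r)"
    by (simp add: sum_divide_distrib)
  also have "\<dots> \<le> (\<Sum>i\<in>S. (1/n) * (a i powr r) powr (d/r))"
    using rd by (intro convex_on_sum[OF S convex_on_powr_nonneg]) (use n in \<open>auto simp: n_def\<close>)
  also have "\<dots> = (1/n) * (\<Sum>i\<in>S. a i powr d)"
    using rd by (simp add: powr_powr sum_distrib_left)
  finally have "(\<Sum>i\<in>S. a i powr r) powr (d/r) \<le> n powr (d/r) * ((1/n) * (\<Sum>i\<in>S. a i powr d))"
    using n by (simp add: powr_divide divide_le_eq mult.commute)
  also have "\<dots> = n powr (d/r - 1) * (\<Sum>i\<in>S. a i powr d)"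
    using n by (simp add: powr_diff)
  finally have "((\<Sum>i\<in>S. a i powr r) powr (d/r)) powr (1/d)
      \<le> (n powr (d/r - 1) * (\<Sum>i\<in>S. a i powr d)) powr (1/d)"
    using rd by (intro powr_mono2) auto
  then show ?thesis
    using rd unfolding n_def by (simp add: powr_powr powr_mult field_simps)
qed

lemma sum_powr_root_le_card_powr:
  fixes a :: "'a \<Rightarrow> real"
  assumes S: "finite S" "S \<noteq> {}" and rd: "0 < r" "0 < d" and a: "\<forall>i\<in>S. 0 \<le> a i"
  shows "(\<Sum>i\<in>S. a i powr r) powr (1/r)
           \<le> real (card S) powr (max (1/r - 1/d) 0) * (\<Sum>i\<in>S. a i powr d) powr (1/d)"
proof (cases "r \<le> d")
  case True
  then have "max (1/r - 1/d) 0 = 1/r - 1/d" using rd by (simp add: frac_le)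
  then show ?thesis using power_mean_inequality[OF S rd(1) True a] by simp
next
  case False
  then have "max (1/r - 1/d) 0 = 0" using rd by (simp add: frac_le)
  moreover have "card S > 0" using S by (simp add: card_gt_0_iff)
  ultimately show ?thesis using sum_powr_root_antimono[OF S(1) rd(2) _ a, of r] False by simp
qed

text \<open>Duality: test the hypothesis with \<open>l\<close> proportional to \<open>a powr (b/p)\<close>, where
  \<open>1/b = 1/c - 1/p\<close>.\<close>
lemma dual_exponent_bound:
  fixes a :: "'a \<Rightarrow> real"
  assumes S: "finite S" and cp: "0 < c" "c < p" and a: "\<forall>i\<in>S. 0 \<le> a i" and B: "0 \<le> B"
    and hyp: "\<And>l. \<forall>i\<in>S. 0 \<le> l i \<Longrightarrow> (\<Sum>i\<in>S. l i powr p) \<le> 1 \<Longrightarrow>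
                 (\<Sum>i\<in>S. (l i * a i) powr c) \<le> B powr c"
  shows "(\<Sum>i\<in>S. a i powr (c * p / (p - c))) \<le> B powr (c * p / (p - c))"
proof -
  define b where "b = c * p / (p - c)"
  have b: "(b / p + 1) * c = b" unfolding b_def using cp by (auto simp: field_simps)
  define X where "X = (\<Sum>i\<in>S. a i powr b)"
  show ?thesis
  proof (cases "X = 0")
    case True then show ?thesis unfolding X_def b_def by simp
  next
    case False
    then have Xp: "X > 0" unfolding X_def by (simp add: less_le sum_nonneg)
    define l where "l i = a i powr (b/p) / X powr (1/p)" for i
    have "(\<Sum>i\<in>S. l i powr p) = (\<Sum>i\<in>S. a i powr b / X)"
      unfolding l_def using cp Xp by (intro sum.cong) (auto simp: powr_divide powr_powr)
    also have "\<dots> = 1" using Xp unfolding X_def by (simp add: sum_divide_distrib[symmetric])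
    finally have l1: "(\<Sum>i\<in>S. l i powr p) \<le> 1" by simp
    have "(\<Sum>i\<in>S. (l i * a i) powr c) = (\<Sum>i\<in>S. a i powr b / X powr (c/p))"
    proof (intro sum.cong refl)
      fix i assume i: "i \<in> S"
      have "l i * a i = a i powr (b/p + 1) / X powr (1/p)"
        unfolding l_def using a i by (simp add: powr_add)
      then show "(l i * a i) powr c = a i powr b / X powr (c/p)"
        using b by (simp add: powr_divide powr_powr)
    qed
    also have "\<dots> = X powr (1 - c/p)"
      using Xp unfolding X_def by (simp add: sum_divide_distrib[symmetric] powr_diff)
    finally have "X powr (1 - c/p) \<le> B powr c" using hyp[of l] l1 unfolding l_def by simp
    then have "(X powr (1 - c/p)) powr (p/(p-c)) \<le> (B powr c) powr (p/(p-c))"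
      using cp by (intro powr_mono2) auto
    moreover have "(1 - c/p) * (p/(p-c)) = 1" using cp by (simp add: field_simps)
    then have "(X powr (1 - c/p)) powr (p/(p-c)) = X" using Xp by (simp only: powr_powr powr_one less_imp_le)
    moreover have "(B powr c) powr (p/(p-c)) = B powr b" unfolding b_def by (simp add: powr_powr)
    ultimately show ?thesis unfolding X_def b_def by simp
  qed
qed

lemma sum_powr_le_powr_larger_exponent:
  fixes a :: "'a \<Rightarrow> real"
  assumes S: "finite S" and bd: "0 < b" "b \<le> d" and a: "\<forall>i\<in>S. 0 \<le> a i \<and> a i \<le> B"
    and sb: "(\<Sum>i\<in>S. a i powr b) \<le> B powr b"
  shows "(\<Sum>i\<in>S. a i powr d) \<le> B powr d"
proof -
  have "(\<Sum>i\<in>S. a i powr d) = (\<Sum>i\<in>S. a i powr b * a i powr (d - b))"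
    by (intro sum.cong) (auto simp: powr_add[symmetric])
  also have "\<dots> \<le> (\<Sum>i\<in>S. a i powr b * B powr (d - b))"
    using a bd by (intro sum_mono mult_left_mono powr_mono2) auto
  also have "\<dots> \<le> B powr b * B powr (d - b)"
    using sb by (simp add: sum_distrib_right[symmetric] mult_right_mono)
  also have "\<dots> = B powr d" by (simp add: powr_add[symmetric])
  finally show ?thesis .
qed

lemma weighted_arith_geom_mean:
  fixes z w :: "'a \<Rightarrow> real"
  assumes S: "finite S" and w: "\<forall>i\<in>S. 0 \<le> w i" "(\<Sum>i\<in>S. w i) = 1" and z: "\<forall>i\<in>S. 0 \<le> z i"
  shows "(\<Prod>i\<in>S. z i powr w i) \<le> (\<Sum>i\<in>S. w i * z i)"
proof (cases "\<exists>i\<in>S. z i = 0")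
  case True
  then have "(\<Prod>i\<in>S. z i powr w i) = 0" using S by (auto intro: prod_zero)
  then show ?thesis using w z by (simp add: sum_nonneg)
next
  case False
  then have zp: "\<forall>i\<in>S. 0 < z i" using z by force
  have "S \<noteq> {}" using w by auto
  have "(\<Prod>i\<in>S. z i powr w i) = (\<Prod>i\<in>S. exp (w i * ln (z i)))"
    using zp by (intro prod.cong) (auto simp: powr_def mult.commute)
  also have "\<dots> = exp (\<Sum>i\<in>S. w i *\<^sub>R ln (z i))"
    using S by (simp add: exp_sum)
  also have "\<dots> \<le> (\<Sum>i\<in>S. w i * exp (ln (z i)))"
    by (rule convex_on_sum[OF S \<open>S \<noteq> {}\<close> exp_convex w(2)]) (use w in auto)
  also have "\<dots> = (\<Sum>i\<in>S. w i * z i)" using zp by simp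
  finally show ?thesis .
qed

lemma real_nat_powr_unbounded:
  assumes "0 < e"
  shows "\<exists>N::nat. 1 \<le> N \<and> D < real N powr e"
proof -
  define N where "N = Suc (nat \<lceil>D powr (1 / e)\<rceil>)"
  have "D powr (1 / e) < real N" unfolding N_def by linarith
  then have "(D powr (1 / e)) powr e < real N powr e"
    using assms by (intro powr_less_mono2) auto
  moreover have "(D powr (1 / e)) powr e = \<bar>D\<bar>" using assms by (simp add: powr_powr)
  ultimately have "D < real N powr e" by linarith
  moreover have "1 \<le> N" unfolding N_def by simp
  ultimately show ?thesis by blast
qed

text \<open>Hoelder's inequality for \<open>|J|\<close> sequences of length \<open>M\<close> and the constant sequence \<open>1\<close>,
  obtained by summing the weighted AM-GM inequality, in which the constant \<open>1/M\<close> carries the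
  remaining weight \<open>1 - \<Sum>\<^sub>j 1/p\<^sub>j\<close>.\<close>
lemma sum_prod_le_card_powr:
  fixes y :: "nat \<Rightarrow> nat \<Rightarrow> real"
  assumes J: "finite J" and p: "\<forall>j\<in>J. 0 < p j" and s: "(\<Sum>j\<in>J. 1 / p j) \<le> 1"
    and y: "\<forall>j\<in>J. \<forall>i. 0 \<le> y j i" and y_norm: "\<forall>j\<in>J. (\<Sum>i<M. y j i powr p j) \<le> 1" and M: "1 \<le> M"
  shows "(\<Sum>i<M. \<Prod>j\<in>J. y j i) \<le> real M powr (1 - (\<Sum>j\<in>J. 1 / p j))"
proof -
  define w0 where "w0 = 1 - (\<Sum>j\<in>J. 1 / p j)"
  obtain a :: nat where a: "a \<notin> J" using ex_new_if_finite[OF infinite_UNIV_nat J] by blast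
  have Mp: "0 < real M" using M by simp
  have am_gm: "(1 / real M) powr w0 * (\<Prod>j\<in>J. y j i) \<le> w0 / real M + (\<Sum>j\<in>J. y j i powr p j / p j)" for i
  proof -
    define w where "w = (\<lambda>j. 1 / p j)(a := w0)"
    define z where "z = (\<lambda>j. y j i powr p j)(a := 1 / real M)"
    have "(\<Prod>j\<in>insert a J. z j powr w j) \<le> (\<Sum>j\<in>insert a J. w j * z j)"
    proof (rule weighted_arith_geom_mean)
      have "(\<Sum>j\<in>J. w j) = (\<Sum>j\<in>J. 1 / p j)" unfolding w_def using a by (intro sum.cong) auto
      then show "(\<Sum>j\<in>insert a J. w j) = 1" using J a by (simp add: w_def w0_def)
    qed (use J p s y Mp in \<open>auto simp: w_def w0_def z_def\<close>)
    moreover have "(\<Prod>j\<in>insert a J. z j powr w j) = (1 / real M) powr w0 * (\<Prod>j\<in>J. y j i)"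
    proof -
      have "(\<Prod>j\<in>J. z j powr w j) = (\<Prod>j\<in>J. y j i)"
        using a p y unfolding z_def w_def by (intro prod.cong) (auto simp: powr_powr_inverse)
      then show ?thesis using J a by (simp add: z_def w_def)
    qed
    moreover have "(\<Sum>j\<in>insert a J. w j * z j) = w0 / real M + (\<Sum>j\<in>J. y j i powr p j / p j)"
    proof -
      have "(\<Sum>j\<in>J. w j * z j) = (\<Sum>j\<in>J. y j i powr p j / p j)"
        using a unfolding z_def w_def by (intro sum.cong) auto
      then show ?thesis using J a by (simp add: z_def w_def)
    qed
    ultimately show ?thesis by simp
  qed
  have "(1 / real M) powr w0 * (\<Sum>i<M. \<Prod>j\<in>J. y j i)
      \<le> (\<Sum>i<M. w0 / real M + (\<Sum>j\<in>J. y j i powr p j / p j))"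
    unfolding sum_distrib_left by (intro sum_mono am_gm)
  also have "\<dots> = w0 + (\<Sum>j\<in>J. (\<Sum>i<M. y j i powr p j) / p j)"
    using Mp by (simp add: sum.distrib sum.swap[of _ J] sum_divide_distrib)
  also have "\<dots> \<le> w0 + (\<Sum>j\<in>J. 1 / p j)"
    using y_norm p by (intro add_left_mono sum_mono divide_right_mono) (auto simp: less_imp_le)
  also have "\<dots> = 1" unfolding w0_def by simp
  finally show ?thesis using Mp unfolding w0_def[symmetric] by (simp add: powr_divide divide_le_eq mult.commute)
qed

section \<open>Mixed norms\<close>

lemma mixed_norm_nonneg: "(\<And>idx. 0 \<le> a idx) \<Longrightarrow> 0 \<le> mixed_norm r n a K j idx"
  by (cases K) auto

lemma mixed_norm_cong:
  assumes "\<And>ix. \<forall>l<j. ix l = idx l \<Longrightarrow> a ix = b ix"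
  shows "mixed_norm r n a K j idx = mixed_norm r n b K j idx"
  using assms
proof (induction K arbitrary: j idx)
  case (Suc K)
  have "mixed_norm r n a K (Suc j) (idx(j := i)) = mixed_norm r n b K (Suc j) (idx(j := i))" for i
    by (rule Suc.IH) (use Suc.prems in auto)
  then show ?case by simp
qed simp

lemma mixed_norm_prefix_irrelevant:
  assumes "\<And>ix iy. \<forall>l\<ge>j0. ix l = iy l \<Longrightarrow> a ix = a iy" and "\<forall>l\<ge>j0. idx l = idx' l" and "j0 \<le> j"
  shows "mixed_norm r n a K j idx = mixed_norm r n a K j idx'"
  using assms(2,3)
proof (induction K arbitrary: j idx idx')
  case 0 then show ?case using assms(1) by simp
next
  case (Suc K)
  have "mixed_norm r n a K (Suc j) (idx(j := i)) = mixed_norm r n a K (Suc j) (idx'(j := i))" for i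
    by (rule Suc.IH) (use Suc.prems in auto)
  then show ?case by simp
qed

lemma mixed_norm_scale:
  assumes c: "0 \<le> c" and r: "\<And>l. j \<le> l \<Longrightarrow> l < j + K \<Longrightarrow> 0 < r l"
  shows "mixed_norm r n (\<lambda>idx. c * a idx) K j idx = c * mixed_norm r n a K j idx"
  using r
proof (induction K arbitrary: j idx)
  case (Suc K)
  have IH: "mixed_norm r n (\<lambda>idx. c * a idx) K (Suc j) (idx(j := i))
      = c * mixed_norm r n a K (Suc j) (idx(j := i))" for i
    by (rule Suc.IH) (use Suc.prems in auto)
  have rj: "0 < r j" using Suc.prems by auto
  have "(\<Sum>i<n j. (c * mixed_norm r n a K (Suc j) (idx(j := i))) powr r j) powr (1 / r j)
      = (c powr r j * (\<Sum>i<n j. mixed_norm r n a K (Suc j) (idx(j := i)) powr r j)) powr (1 / r j)"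
    by (simp add: powr_mult sum_distrib_left)
  also have "\<dots> = c * (\<Sum>i<n j. mixed_norm r n a K (Suc j) (idx(j := i)) powr r j) powr (1 / r j)"
    using rj c by (simp add: powr_mult powr_powr)
  finally show ?case using IH by simp
qed simp

lemma mixed_norm_change_exponents:
  assumes a: "\<And>idx. 0 \<le> a idx"
    and lv: "\<And>l. j \<le> l \<Longrightarrow> l < j + K \<Longrightarrow> 0 < r l \<and> 0 < d l \<and> 1 \<le> n l"
  shows "mixed_norm r n a K j idx
     \<le> (\<Prod>l\<in>{j..<j+K}. real (n l) powr max (1 / r l - 1 / d l) 0) * mixed_norm d n a K j idx"
  using lv
proof (induction K arbitrary: j idx)
  case (Suc K)
  define P where "P = (\<Prod>l\<in>{Suc j..<Suc j+K}. real (n l) powr max (1 / r l - 1 / d l) 0)"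
  define b where "b i = mixed_norm d n a K (Suc j) (idx(j := i))" for i
  have P0: "0 \<le> P" unfolding P_def by (rule prod_nonneg) simp
  have b0: "0 \<le> b i" for i unfolding b_def by (rule mixed_norm_nonneg[OF a])
  have IH: "mixed_norm r n a K (Suc j) (idx(j := i)) \<le> P * b i" for i
    unfolding P_def b_def by (rule Suc.IH) (use Suc.prems in auto)
  have lj: "0 < r j" "0 < d j" "1 \<le> n j" using Suc.prems[of j] by auto
  have "mixed_norm r n a (Suc K) j idx
      \<le> (\<Sum>i<n j. (P * b i) powr r j) powr (1 / r j)"
    using IH lj by (simp, intro powr_mono2 sum_mono) (auto intro: sum_nonneg mixed_norm_nonneg a)
  also have "\<dots> = P * (\<Sum>i<n j. b i powr r j) powr (1 / r j)"
    using lj P0 by (simp add: powr_mult sum_distrib_left[symmetric] powr_powr)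
  also have "\<dots> \<le> P * (real (n j) powr max (1 / r j - 1 / d j) 0 * (\<Sum>i<n j. b i powr d j) powr (1 / d j))"
    using sum_powr_root_le_card_powr[of "{..<n j}" "r j" "d j" b] lj b0
    by (intro mult_left_mono[OF _ P0]) (auto simp: lessThan_empty_iff)
  also have "\<dots> = (\<Prod>l\<in>{j..<j + Suc K}. real (n l) powr max (1 / r l - 1 / d l) 0)
                  * mixed_norm d n a (Suc K) j idx"
    unfolding P_def b_def by (simp add: prod.atLeast_Suc_lessThan)
  finally show ?case .
qed simp

lemma mixed_norm_Suc_ge_term:
  assumes r: "0 < r j" and i: "i < n j" and a: "\<And>idx. 0 \<le> a idx"
  shows "mixed_norm r n a K (Suc j) (idx(j := i)) \<le> mixed_norm r n a (Suc K) j idx"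
proof -
  let ?b = "\<lambda>i. mixed_norm r n a K (Suc j) (idx(j := i))"
  have "?b i powr r j \<le> (\<Sum>i<n j. ?b i powr r j)" using i by (intro member_le_sum) auto
  then have "(?b i powr r j) powr (1 / r j) \<le> (\<Sum>i<n j. ?b i powr r j) powr (1 / r j)"
    using r by (intro powr_mono2) auto
  then show ?thesis using r by (simp add: powr_powr_inverse mixed_norm_nonneg[OF a])
qed

lemma mixed_norm_Suc_ge_card:
  assumes r: "0 < r j" and M: "M \<le> n j" and terms: "\<And>i. i < M \<Longrightarrow> 1 \<le> mixed_norm r n a K (Suc j) (idx(j := i))"
  shows "real M powr (1 / r j) \<le> mixed_norm r n a (Suc K) j idx"
proof -
  have "real M = (\<Sum>i<M. 1 powr r j)" by simp
  also have "\<dots> \<le> (\<Sum>i<M. mixed_norm r n a K (Suc j) (idx(j := i)) powr r j)"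
    using terms r by (intro sum_mono powr_mono2) auto
  also have "\<dots> \<le> (\<Sum>i<n j. mixed_norm r n a K (Suc j) (idx(j := i)) powr r j)"
    using M by (intro sum_mono2) auto
  finally show ?thesis using r by (simp add: powr_mono2)
qed

section \<open>Averages over signs and cotype 2\<close>

text \<open>\<open>sign_average N F\<close> is the mean of \<open>F \<epsilon>\<close> over the \<open>2^N\<close> sign vectors
  \<open>\<epsilon> \<in> {-1,1}^N\<close>, extended by \<open>1\<close> beyond \<open>N\<close>.\<close>
fun sign_average :: "nat \<Rightarrow> ((nat \<Rightarrow> real) \<Rightarrow> real) \<Rightarrow> real" where
  "sign_average 0 F = F (\<lambda>_. 1)"
| "sign_average (Suc N) F =
     (sign_average N (\<lambda>\<epsilon>. F (\<epsilon>(N := 1))) + sign_average N (\<lambda>\<epsilon>. F (\<epsilon>(N := -1)))) / 2"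

lemma sign_average_mono: "(\<And>\<epsilon>. F \<epsilon> \<le> G \<epsilon>) \<Longrightarrow> sign_average N F \<le> sign_average N G"
proof (induction N arbitrary: F G)
  case (Suc N)
  have "sign_average N (\<lambda>\<epsilon>. F (\<epsilon>(N := c))) \<le> sign_average N (\<lambda>\<epsilon>. G (\<epsilon>(N := c)))" for c
    using Suc by auto
  from this[of 1] this[of "-1"] show ?case by simp
qed simp

lemma sign_average_nonneg: "(\<And>\<epsilon>. 0 \<le> F \<epsilon>) \<Longrightarrow> 0 \<le> sign_average N F"
proof -
  have "sign_average N (\<lambda>_. 0) = 0" by (induction N) auto
  then show "(\<And>\<epsilon>. 0 \<le> F \<epsilon>) \<Longrightarrow> 0 \<le> sign_average N F"
    using sign_average_mono[of "\<lambda>_. 0" F N] by simp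
qed

lemma sign_average_le_some_sign:
  "\<exists>\<epsilon>. (\<forall>i<N. \<epsilon> i = 1 \<or> \<epsilon> i = -1) \<and> sign_average N F \<le> F \<epsilon>"
proof (induction N arbitrary: F)
  case 0 then show ?case by auto
next
  case (Suc N)
  define half where "half c = sign_average N (\<lambda>\<epsilon>. F (\<epsilon>(N := c)))" for c
  have avg: "sign_average (Suc N) F = (half 1 + half (-1)) / 2" by (simp add: half_def)
  have "\<exists>c::real. (c = 1 \<or> c = -1) \<and> sign_average (Suc N) F \<le> half c"
  proof (cases "half (-1) \<le> half 1")
    case True then show ?thesis using avg by (intro exI[of _ 1]) simp
  next
    case False then show ?thesis using avg by (intro exI[of _ "-1"]) simp
  qed
  then obtain c :: real where c: "c = 1 \<or> c = -1"
    and larger: "sign_average (Suc N) F \<le> sign_average N (\<lambda>\<epsilon>. F (\<epsilon>(N := c)))"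
    unfolding half_def by blast
  obtain \<epsilon> where \<epsilon>: "\<forall>i<N. \<epsilon> i = 1 \<or> \<epsilon> i = -1"
    and "sign_average N (\<lambda>\<epsilon>. F (\<epsilon>(N := c))) \<le> F (\<epsilon>(N := c))"
    using Suc[of "\<lambda>\<epsilon>. F (\<epsilon>(N := c))"] by auto
  then have "sign_average (Suc N) F \<le> F (\<epsilon>(N := c))" using larger by simp
  moreover have "\<forall>i<Suc N. (\<epsilon>(N := c)) i = 1 \<or> (\<epsilon>(N := c)) i = -1"
    using \<epsilon> c by (auto simp: less_Suc_eq)
  ultimately show ?case by blast
qed

text \<open>The parallelogram law, iterated: Rademacher sums are orthogonal in an inner product space.\<close>
lemma sign_average_norm_sq:
  fixes w :: "nat \<Rightarrow> 'a::real_inner"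
  shows "sign_average N (\<lambda>\<epsilon>. (norm (z + (\<Sum>i<N. \<epsilon> i *\<^sub>R w i)))\<^sup>2) = (norm z)\<^sup>2 + (\<Sum>i<N. (norm (w i))\<^sup>2)"
proof (induction N arbitrary: z)
  case (Suc N)
  have s: "(\<Sum>i<Suc N. (\<epsilon>(N := c)) i *\<^sub>R w i) = c *\<^sub>R w N + (\<Sum>i<N. \<epsilon> i *\<^sub>R w i)" for \<epsilon> c
    by (simp add: lessThan_Suc add.commute)
  have parallelogram: "(norm (z + w N))\<^sup>2 + (norm (z - w N))\<^sup>2 = 2 * (norm z)\<^sup>2 + 2 * (norm (w N))\<^sup>2"
    by (simp add: power2_norm_eq_inner inner_add_left inner_add_right inner_diff_left
        inner_diff_right inner_commute)
  have "sign_average (Suc N) (\<lambda>\<epsilon>. (norm (z + (\<Sum>i<Suc N. \<epsilon> i *\<^sub>R w i)))\<^sup>2)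
      = (sign_average N (\<lambda>\<epsilon>. (norm ((z + w N) + (\<Sum>i<N. \<epsilon> i *\<^sub>R w i)))\<^sup>2)
         + sign_average N (\<lambda>\<epsilon>. (norm ((z - w N) + (\<Sum>i<N. \<epsilon> i *\<^sub>R w i)))\<^sup>2)) / 2"
    by (simp add: s algebra_simps)
  also have "\<dots> = ((norm (z + w N))\<^sup>2 + (norm (z - w N))\<^sup>2) / 2 + (\<Sum>i<N. (norm (w i))\<^sup>2)"
    unfolding Suc.IH by (simp add: field_simps)
  also have "\<dots> = (norm z)\<^sup>2 + (\<Sum>i<Suc N. (norm (w i))\<^sup>2)"
    using parallelogram by simp
  finally show ?case .
qed simp

lemma sign_average_minkowski:
  fixes h :: "'b \<Rightarrow> (nat \<Rightarrow> real) \<Rightarrow> real"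
  assumes L: "finite L" and s: "1 \<le> s" and h: "\<And>l \<epsilon>. 0 \<le> h l \<epsilon>"
  shows "(\<Sum>l\<in>L. (sign_average N (h l)) powr s) powr (1/s)
           \<le> sign_average N (\<lambda>\<epsilon>. (\<Sum>l\<in>L. h l \<epsilon> powr s) powr (1/s))"
  using h
proof (induction N arbitrary: h)
  case (Suc N)
  define u where "u l = sign_average N (\<lambda>\<epsilon>. h l (\<epsilon>(N := 1)))" for l
  define v where "v l = sign_average N (\<lambda>\<epsilon>. h l (\<epsilon>(N := -1)))" for l
  have u0: "0 \<le> u l" "0 \<le> v l" for l
    unfolding u_def v_def using Suc.prems by (auto intro: sign_average_nonneg)
  have half: "(\<Sum>l\<in>L. (x l / 2) powr s) powr (1/s) = (\<Sum>l\<in>L. x l powr s) powr (1/s) / 2"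
    for x :: "'b \<Rightarrow> real"
  proof -
    have "(\<Sum>l\<in>L. (x l / 2) powr s) = (\<Sum>l\<in>L. x l powr s) / 2 powr s"
      by (simp add: powr_divide sum_divide_distrib)
    then show ?thesis using s by (simp add: powr_divide powr_powr)
  qed
  have "(\<Sum>l\<in>L. (sign_average (Suc N) (h l)) powr s) powr (1/s)
      = (\<Sum>l\<in>L. (u l + v l) powr s) powr (1/s) / 2"
    using half[of "\<lambda>l. u l + v l"] unfolding u_def v_def by simp
  also have "\<dots> \<le> ((\<Sum>l\<in>L. u l powr s) powr (1/s) + (\<Sum>l\<in>L. v l powr s) powr (1/s)) / 2"
    using minkowski_inequality[OF L s, of u v] u0 by simp
  also have "\<dots> \<le> (sign_average N (\<lambda>\<epsilon>. (\<Sum>l\<in>L. h l (\<epsilon>(N := 1)) powr s) powr (1/s))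
                  + sign_average N (\<lambda>\<epsilon>. (\<Sum>l\<in>L. h l (\<epsilon>(N := -1)) powr s) powr (1/s))) / 2"
    using Suc.IH[of "\<lambda>l \<epsilon>. h l (\<epsilon>(N := 1))"] Suc.IH[of "\<lambda>l \<epsilon>. h l (\<epsilon>(N := -1))"] Suc.prems
    unfolding u_def v_def by simp
  also have "\<dots> = sign_average (Suc N) (\<lambda>\<epsilon>. (\<Sum>l\<in>L. h l \<epsilon> powr s) powr (1/s))" by simp
  finally show ?case .
qed simp

text \<open>Mixed norms with all exponents in \<open>[2, q]\<close> of functions with values in an inner
  product space have cotype \<open>q\<close>.  The induction runs over the levels: Minkowski's inequality
  moves the outer \<open>\<ell>\<^sub>q\<close>-sum inside each level, and \<open>sign_average_minkowski\<close> moves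
  the average outside.\<close>
lemma mixed_norm_cotype_sign_average:
  fixes W :: "nat \<Rightarrow> (nat \<Rightarrow> nat) \<Rightarrow> 'a::real_inner"
  assumes q: "2 \<le> q" and e_range: "\<And>l. j \<le> l \<Longrightarrow> l < j + K \<Longrightarrow> 2 \<le> e l \<and> e l \<le> q"
  shows "(\<Sum>i<N. mixed_norm e n (\<lambda>idx. norm (W i idx)) K j idx powr q) powr (2/q)
     \<le> sign_average N (\<lambda>\<epsilon>. mixed_norm e n (\<lambda>idx. norm (\<Sum>i<N. \<epsilon> i *\<^sub>R W i idx)) K j idx powr 2)"
  using e_range
proof (induction K arbitrary: j idx)
  case 0
  have "(\<Sum>i<N. norm (W i idx) powr q) powr (1/q) \<le> (\<Sum>i<N. norm (W i idx) powr 2) powr (1/2)"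
    using q by (intro sum_powr_root_antimono) auto
  then have "((\<Sum>i<N. norm (W i idx) powr q) powr (1/q)) powr 2
      \<le> ((\<Sum>i<N. norm (W i idx) powr 2) powr (1/2)) powr 2"
    by (rule_tac powr_mono2) auto
  then have "(\<Sum>i<N. norm (W i idx) powr q) powr (2/q) \<le> (\<Sum>i<N. (norm (W i idx))\<^sup>2)"
    by (simp add: powr_powr sum_nonneg)
  also have "\<dots> = sign_average N (\<lambda>\<epsilon>. (norm (0 + (\<Sum>i<N. \<epsilon> i *\<^sub>R W i idx)))\<^sup>2)"
    by (simp only: sign_average_norm_sq) simp
  finally show ?case by simp
next
  case (Suc K)
  define E where "E = e j"
  have E: "2 \<le> E" "E \<le> q" using Suc.prems[of j] unfolding E_def by auto
  define NN where "NN V l = mixed_norm e n (\<lambda>idx. norm (V idx)) K (Suc j) (idx(j := l))"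
    for V :: "(nat \<Rightarrow> nat) \<Rightarrow> 'a" and l
  have MN: "mixed_norm e n (\<lambda>idx. norm (V idx)) (Suc K) j idx = (\<Sum>l<n j. NN V l powr E) powr (1/E)"
    for V unfolding NN_def E_def by simp
  define SW where "SW \<epsilon> idx = (\<Sum>i<N. \<epsilon> i *\<^sub>R W i idx)" for \<epsilon> idx
  define h where "h l \<epsilon> = NN (SW \<epsilon>) l powr 2" for l \<epsilon>
  have IH: "(\<Sum>i<N. NN (W i) l powr q) powr (2/q) \<le> sign_average N (h l)" for l
    unfolding NN_def h_def SW_def using Suc.prems by (intro Suc.IH) auto
  have "(\<Sum>i<N. mixed_norm e n (\<lambda>idx. norm (W i idx)) (Suc K) j idx powr q) powr (2/q)
      = ((\<Sum>i<N. (\<Sum>l<n j. NN (W i) l powr E) powr (q/E)) powr (1/(q/E))) powr (2/E)"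
    unfolding MN using E by (simp add: powr_powr)
  also have "\<dots> \<le> (\<Sum>l<n j. (\<Sum>i<N. (NN (W i) l powr E) powr (q/E)) powr (1/(q/E))) powr (2/E)"
    using E by (intro powr_mono2 minkowski_inequality_sum) (auto intro: mixed_norm_nonneg simp: NN_def)
  also have "\<dots> = (\<Sum>l<n j. ((\<Sum>i<N. NN (W i) l powr q) powr (2/q)) powr (E/2)) powr (1/(E/2))"
    using E by (simp add: powr_powr)
  also have "\<dots> \<le> (\<Sum>l<n j. (sign_average N (h l)) powr (E/2)) powr (1/(E/2))"
    using E IH by (intro powr_mono2 sum_mono) (auto intro: sum_nonneg)
  also have "\<dots> \<le> sign_average N (\<lambda>\<epsilon>. (\<Sum>l<n j. h l \<epsilon> powr (E/2)) powr (1/(E/2)))"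
    using E by (intro sign_average_minkowski) (auto simp: h_def)
  also have "\<dots> = sign_average N (\<lambda>\<epsilon>. mixed_norm e n (\<lambda>idx. norm (SW \<epsilon> idx)) (Suc K) j idx powr 2)"
    unfolding MN h_def using E by (simp add: powr_powr)
  finally show ?case unfolding SW_def .
qed

lemma mixed_norm_cotype:
  fixes W :: "nat \<Rightarrow> (nat \<Rightarrow> nat) \<Rightarrow> 'a::real_inner"
  assumes q: "2 \<le> q" and e_range: "\<And>l. j \<le> l \<Longrightarrow> l < j + K \<Longrightarrow> 2 \<le> e l \<and> e l \<le> q"
  shows "\<exists>\<epsilon>. (\<forall>i<N. \<epsilon> i = 1 \<or> \<epsilon> i = -1) \<and>
     (\<Sum>i<N. mixed_norm e n (\<lambda>idx. norm (W i idx)) K j idx powr q) powr (1/q)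
     \<le> mixed_norm e n (\<lambda>idx. norm (\<Sum>i<N. \<epsilon> i *\<^sub>R W i idx)) K j idx"
proof -
  obtain \<epsilon> where \<epsilon>: "\<forall>i<N. \<epsilon> i = 1 \<or> \<epsilon> i = -1"
    and avg_le: "sign_average N (\<lambda>\<epsilon>. mixed_norm e n (\<lambda>idx. norm (\<Sum>i<N. \<epsilon> i *\<^sub>R W i idx)) K j idx powr 2)
     \<le> mixed_norm e n (\<lambda>idx. norm (\<Sum>i<N. \<epsilon> i *\<^sub>R W i idx)) K j idx powr 2"
    using sign_average_le_some_sign by blast
  have "(\<Sum>i<N. mixed_norm e n (\<lambda>idx. norm (W i idx)) K j idx powr q) powr (2/q)
     \<le> mixed_norm e n (\<lambda>idx. norm (\<Sum>i<N. \<epsilon> i *\<^sub>R W i idx)) K j idx powr 2"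
    using mixed_norm_cotype_sign_average[OF q e_range] avg_le by (rule order_trans)
  then have "((\<Sum>i<N. mixed_norm e n (\<lambda>idx. norm (W i idx)) K j idx powr q) powr (2/q)) powr (1/2)
     \<le> (mixed_norm e n (\<lambda>idx. norm (\<Sum>i<N. \<epsilon> i *\<^sub>R W i idx)) K j idx powr 2) powr (1/2)"
    by (intro powr_mono2) auto
  then have "(\<Sum>i<N. mixed_norm e n (\<lambda>idx. norm (W i idx)) K j idx powr q) powr (1/q)
     \<le> mixed_norm e n (\<lambda>idx. norm (\<Sum>i<N. \<epsilon> i *\<^sub>R W i idx)) K j idx"
    by (simp add: powr_powr mixed_norm_nonneg)
  then show ?thesis using \<epsilon> by blast
qed

section \<open>Sequence spaces and multilinear forms\<close>

lemma lp_mem_finite_support: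
  fixes x :: "nat \<Rightarrow> 'k::real_normed_field"
  assumes "\<And>t. N \<le> t \<Longrightarrow> x t = 0"
  shows "lp_mem p x"
  unfolding lp_mem_def by (rule summable_finite[of "{..<N}"]) (use assms in auto)

lemma lp_norm_finite_support:
  fixes x :: "nat \<Rightarrow> 'k::real_normed_field"
  assumes "\<And>t. N \<le> t \<Longrightarrow> x t = 0"
  shows "lp_norm p x = (\<Sum>t<N. norm (x t) powr p) powr (1/p)"
  unfolding lp_norm_def by (subst suminf_finite[of "{..<N}"]) (use assms in auto)

lemma lp_mem_unit_vec: "lp_mem p (unit_vec i :: nat \<Rightarrow> 'k::real_normed_field)"
  by (rule lp_mem_finite_support[of "Suc i"]) (auto simp: unit_vec_def)

lemma lp_norm_unit_vec: "lp_norm p (unit_vec i :: nat \<Rightarrow> 'k::real_normed_field) = 1"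
proof -
  have "lp_norm p (unit_vec i :: nat \<Rightarrow> 'k) = (\<Sum>t<Suc i. norm (unit_vec i t :: 'k) powr p) powr (1/p)"
    by (rule lp_norm_finite_support) (auto simp: unit_vec_def)
  also have "(\<Sum>t<Suc i. norm (unit_vec i t :: 'k) powr p) = (\<Sum>t<Suc i. if t = i then 1 else 0)"
    by (intro sum.cong) (auto simp: unit_vec_def)
  finally show ?thesis by simp
qed

lemma lp_norm_nonneg: "0 \<le> lp_norm p x"
  by (simp add: lp_norm_def)

lemma lp_norm_zero: "lp_norm p (\<lambda>t. 0 :: 'k::real_normed_field) = 0"
  by (simp add: lp_norm_def)

lemma lp_mem_scale:
  fixes x :: "nat \<Rightarrow> 'k::real_normed_field"
  assumes "lp_mem p x"
  shows "lp_mem p (\<lambda>t. c * x t)"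
  using summable_mult[OF assms[unfolded lp_mem_def], of "norm c powr p"]
  unfolding lp_mem_def by (simp add: norm_mult powr_mult)

lemma lp_norm_scale:
  fixes x :: "nat \<Rightarrow> 'k::real_normed_field"
  assumes "lp_mem p x" "0 < p"
  shows "lp_norm p (\<lambda>t. c * x t) = norm c * lp_norm p x"
proof -
  have "(\<Sum>t. norm (c * x t) powr p) = norm c powr p * (\<Sum>t. norm (x t) powr p)"
    using suminf_mult[OF assms(1)[unfolded lp_mem_def]] by (simp add: norm_mult powr_mult)
  then show ?thesis
    unfolding lp_norm_def using assms(2) by (simp add: powr_mult powr_powr_inverse)
qed

lemma lp_norm_eq_0D:
  fixes x :: "nat \<Rightarrow> 'k::real_normed_field"
  assumes "lp_mem p x" "lp_norm p x = 0"
  shows "x = (\<lambda>t. 0)"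
proof -
  have "(\<Sum>t. norm (x t) powr p) = 0" using assms unfolding lp_norm_def by simp
  then have "\<forall>t. norm (x t) powr p = 0" using assms(1) unfolding lp_mem_def
    by (subst (asm) suminf_eq_zero_iff) auto
  then show ?thesis by auto
qed

lemma sum_le_lp_norm_powr:
  fixes x :: "nat \<Rightarrow> 'k::real_normed_field"
  assumes "lp_mem p x" "finite I" "0 < p"
  shows "(\<Sum>t\<in>I. norm (x t) powr p) \<le> lp_norm p x powr p"
proof -
  have "(\<Sum>t\<in>I. norm (x t) powr p) \<le> (\<Sum>t. norm (x t) powr p)"
    using assms unfolding lp_mem_def by (intro sum_le_suminf) auto
  also have "\<dots> = lp_norm p x powr p"
    unfolding lp_norm_def using assms(1,3) unfolding lp_mem_def by (simp add: powr_powr suminf_nonneg)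
  finally show ?thesis .
qed

lemma norm_le_lp_norm:
  fixes x :: "nat \<Rightarrow> 'k::real_normed_field"
  assumes "lp_mem p x" "0 < p"
  shows "norm (x t) \<le> lp_norm p x"
proof -
  have "norm (x t) powr p \<le> lp_norm p x powr p"
    using sum_le_lp_norm_powr[OF assms(1), of "{t}"] assms(2) by simp
  then show ?thesis using assms(2) by (rule_tac powr_le_cancel_base[of p]) (auto simp: lp_norm_nonneg)
qed

definition finite_comb :: "(nat \<Rightarrow> 'k::real_normed_field) \<Rightarrow> nat \<Rightarrow> nat \<Rightarrow> 'k" where
  "finite_comb c N = (\<lambda>t. \<Sum>i<N. c i * unit_vec i t)"

lemma finite_comb_apply: "finite_comb c N t = (if t < N then c t else 0)"
  unfolding finite_comb_def unit_vec_def by (simp add: if_distrib cong: if_cong)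

lemma lp_mem_finite_comb: "lp_mem p (finite_comb c N)"
  by (rule lp_mem_finite_support[of N]) (simp add: finite_comb_apply)

lemma lp_norm_finite_comb_le_1:
  fixes c :: "nat \<Rightarrow> 'k::real_normed_field"
  assumes "0 < p" "\<And>i. i < N \<Longrightarrow> norm (c i) \<le> l i" "(\<Sum>i<N. l i powr p) \<le> 1"
  shows "lp_norm p (finite_comb c N) \<le> 1"
proof -
  have "(\<Sum>t<N. norm (finite_comb c N t) powr p) \<le> (\<Sum>t<N. l t powr p)"
    using assms by (intro sum_mono powr_mono2) (auto simp: finite_comb_apply)
  then have "(\<Sum>t<N. norm (finite_comb c N t) powr p) \<le> 1" using assms(3) by linarith
  then have "(\<Sum>t<N. norm (finite_comb c N t) powr p) powr (1/p) \<le> 1"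
    using assms(1) by (intro powr_le1) (simp_all add: sum_nonneg)
  then show ?thesis by (subst lp_norm_finite_support[of N]) (auto simp: finite_comb_apply)
qed

lemma multi_dom_upd:
  "x \<in> multi_dom m p \<Longrightarrow> j < m \<Longrightarrow> lp_mem (p j) f \<Longrightarrow> x(j := f) \<in> multi_dom m p"
  unfolding multi_dom_def by auto

lemma multi_dom_lp_mem: "x \<in> multi_dom m p \<Longrightarrow> j < m \<Longrightarrow> lp_mem (p j) (x j)"
  unfolding multi_dom_def by auto

lemma zero_in_multi_dom: "(\<lambda>j t. 0) \<in> multi_dom m p"
  unfolding multi_dom_def by (auto intro: lp_mem_finite_support[of 0])

lemma multilinear_form_scale:
  "multilinear_form m p T \<Longrightarrow> x \<in> multi_dom m p \<Longrightarrow> j < m \<Longrightarrow> T (x(j := (\<lambda>t. c * x j t))) = c * T x"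
  unfolding multilinear_form_def by blast

lemma multilinear_form_add:
  "multilinear_form m p T \<Longrightarrow> x \<in> multi_dom m p \<Longrightarrow> j < m \<Longrightarrow> lp_mem (p j) y \<Longrightarrow>
     T (x(j := (\<lambda>t. x j t + y t))) = T x + T (x(j := y))"
  unfolding multilinear_form_def by blast

lemma multilinear_form_zero:
  fixes T :: "(nat \<Rightarrow> nat \<Rightarrow> 'k::real_normed_field) \<Rightarrow> 'k"
  assumes "multilinear_form m p T" "x \<in> multi_dom m p" "j < m"
  shows "T (x(j := (\<lambda>t. 0))) = 0"
  using multilinear_form_scale[OF assms, of 0] by simp

lemma multilinear_form_sum:
  fixes T :: "(nat \<Rightarrow> nat \<Rightarrow> 'k::real_normed_field) \<Rightarrow> 'k"
  assumes T: "multilinear_form m p T" and x: "x \<in> multi_dom m p" and j: "j < m"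
    and S: "finite S" and f: "\<And>i t. i \<in> S \<Longrightarrow> N \<le> t \<Longrightarrow> f i t = 0"
  shows "T (x(j := (\<lambda>t. \<Sum>i\<in>S. c i * f i t))) = (\<Sum>i\<in>S. c i * T (x(j := f i)))"
  using S f
proof (induction S rule: finite_induct)
  case empty
  then show ?case using multilinear_form_zero[OF T x j] by (simp only: sum.empty)
next
  case (insert a S)
  define y where "y = x(j := (\<lambda>t. c a * f a t))"
  define g where "g = (\<lambda>t. \<Sum>i\<in>S. c i * f i t)"
  have fa: "lp_mem (p j) (f a)" using insert.prems by (intro lp_mem_finite_support[of N]) auto
  have y: "y \<in> multi_dom m p" unfolding y_def using x j fa by (intro multi_dom_upd lp_mem_scale)
  have g: "lp_mem (p j) g" unfolding g_def using insert.prems by (intro lp_mem_finite_support[of N]) auto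
  have xa: "x(j := f a) \<in> multi_dom m p" using x j fa by (rule multi_dom_upd)
  have "T (x(j := (\<lambda>t. \<Sum>i\<in>insert a S. c i * f i t))) = T (y(j := (\<lambda>t. y j t + g t)))"
    unfolding y_def g_def using insert by simp
  also have "\<dots> = T y + T (y(j := g))" by (rule multilinear_form_add[OF T y j g])
  also have "T y = c a * T (x(j := f a))"
    using multilinear_form_scale[OF T xa j, of "c a"] unfolding y_def by simp
  also have "T (y(j := g)) = (\<Sum>i\<in>S. c i * T (x(j := f i)))"
    unfolding y_def g_def fun_upd_upd by (rule insert.IH) (use insert.prems in auto)
  finally show ?case by (simp only: sum.insert[OF insert.hyps])
qed

lemma multilinear_form_finite_comb:
  fixes T :: "(nat \<Rightarrow> nat \<Rightarrow> 'k::real_normed_field) \<Rightarrow> 'k"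
  assumes "multilinear_form m p T" "x \<in> multi_dom m p" "j < m"
  shows "T (x(j := finite_comb c N)) = (\<Sum>i<N. c i * T (x(j := unit_vec i)))"
  unfolding finite_comb_def
  by (rule multilinear_form_sum[OF assms, of "{..<N}" "Suc N"]) (auto simp: unit_vec_def)

lemma form_norm_bdd_above:
  fixes T :: "(nat \<Rightarrow> nat \<Rightarrow> 'k::real_normed_field) \<Rightarrow> 'k"
  assumes "bounded_multilinear_form m p T"
  shows "bdd_above ((\<lambda>x. norm (T x)) ` {x\<in>multi_dom m p. \<forall>j<m. lp_norm (p j) (x j) \<le> 1})"
proof -
  obtain C where C: "\<forall>x\<in>multi_dom m p. norm (T x) \<le> C * (\<Prod>j<m. lp_norm (p j) (x j))"
    using assms unfolding bounded_multilinear_form_def by blast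
  show ?thesis
  proof (rule bdd_aboveI2)
    fix x :: "nat \<Rightarrow> nat \<Rightarrow> 'k" assume x: "x \<in> {x\<in>multi_dom m p. \<forall>j<m. lp_norm (p j) (x j) \<le> 1}"
    have P: "0 \<le> (\<Prod>j<m. lp_norm (p j) (x j))" "(\<Prod>j<m. lp_norm (p j) (x j)) \<le> 1"
      using x by (auto intro: prod_nonneg prod_le_1 simp: lp_norm_nonneg)
    have "norm (T x) \<le> C * (\<Prod>j<m. lp_norm (p j) (x j))" using C x by auto
    also have "\<dots> \<le> \<bar>C\<bar>" using P by (metis abs_ge_self mult_left_le mult_right_mono order_trans abs_ge_zero)
    finally show "norm (T x) \<le> \<bar>C\<bar>" .
  qed
qed

lemma norm_le_form_norm:
  fixes T :: "(nat \<Rightarrow> nat \<Rightarrow> 'k::real_normed_field) \<Rightarrow> 'k"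
  assumes "bounded_multilinear_form m p T" "x \<in> multi_dom m p" "\<forall>j<m. lp_norm (p j) (x j) \<le> 1"
  shows "norm (T x) \<le> form_norm m p T"
  unfolding form_norm_def by (rule cSUP_upper[OF _ form_norm_bdd_above[OF assms(1)]]) (use assms in auto)

lemma form_norm_nonneg:
  fixes T :: "(nat \<Rightarrow> nat \<Rightarrow> 'k::real_normed_field) \<Rightarrow> 'k"
  assumes "bounded_multilinear_form m p T"
  shows "0 \<le> form_norm m p T"
  using norm_le_form_norm[OF assms zero_in_multi_dom] by (auto simp: lp_norm_zero intro: order_trans[OF norm_ge_zero])

lemma multilinear_form_normalise_arg:
  fixes T :: "(nat \<Rightarrow> nat \<Rightarrow> 'k::real_normed_field) \<Rightarrow> 'k"
  assumes T: "multilinear_form m p T" and x: "x \<in> multi_dom m p" and K: "K < m" and pK: "0 < p K"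
    and \<nu>: "lp_norm (p K) (x K) = \<nu>" "0 < \<nu>"
  defines "x' \<equiv> x(K := (\<lambda>t. of_real (1/\<nu>) * x K t))"
  shows "x' \<in> multi_dom m p" and "lp_norm (p K) (x' K) = 1" and "norm (T x) = \<nu> * norm (T x')"
proof -
  have xK: "lp_mem (p K) (x K)" using x K by (rule multi_dom_lp_mem)
  show x': "x' \<in> multi_dom m p" unfolding x'_def using x K xK by (intro multi_dom_upd lp_mem_scale)
  show "lp_norm (p K) (x' K) = 1"
    unfolding x'_def using lp_norm_scale[OF xK pK, of "of_real (1/\<nu>)"] \<nu> by (simp add: norm_divide)
  have "x'(K := (\<lambda>t. of_real \<nu> * x' K t)) = x"
    unfolding x'_def using \<nu> by (auto simp: mult.assoc[symmetric] of_real_mult[symmetric])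
  then have "T x = of_real \<nu> * T x'" using multilinear_form_scale[OF T x' K, of "of_real \<nu>"] by simp
  then show "norm (T x) = \<nu> * norm (T x')" using \<nu> by (simp add: norm_mult)
qed

lemma norm_le_form_norm_prod:
  fixes T :: "(nat \<Rightarrow> nat \<Rightarrow> 'k::real_normed_field) \<Rightarrow> 'k"
  assumes B: "bounded_multilinear_form m p T" and pp: "\<forall>j<m. 0 < p j" and x: "x \<in> multi_dom m p"
  shows "norm (T x) \<le> form_norm m p T * (\<Prod>j<m. lp_norm (p j) (x j))"
proof -
  have T: "multilinear_form m p T" using B unfolding bounded_multilinear_form_def by simp
  have "norm (T x) \<le> form_norm m p T * (\<Prod>j<K. lp_norm (p j) (x j))"
    if "K \<le> m" "x \<in> multi_dom m p" "\<forall>j. K \<le> j \<and> j < m \<longrightarrow> lp_norm (p j) (x j) \<le> 1" for K x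
    using that
  proof (induction K arbitrary: x)
    case 0
    then show ?case using norm_le_form_norm[OF B] by auto
  next
    case (Suc K)
    have K: "K < m" using Suc.prems by simp
    define \<nu> where "\<nu> = lp_norm (p K) (x K)"
    show ?case
    proof (cases "\<nu> = 0")
      case True
      then have "x = x(K := (\<lambda>t. 0))"
        using lp_norm_eq_0D[OF multi_dom_lp_mem[OF Suc.prems(2) K]] unfolding \<nu>_def by auto
      then have "T x = 0" using multilinear_form_zero[OF T Suc.prems(2) K] by simp
      then show ?thesis
        using form_norm_nonneg[OF B] by (simp, intro mult_nonneg_nonneg prod_nonneg) (auto simp: lp_norm_nonneg)
    next
      case False
      then have \<nu>0: "0 < \<nu>" using lp_norm_nonneg unfolding \<nu>_def by (metis less_eq_real_def)
      define x' where "x' = x(K := (\<lambda>t. of_real (1/\<nu>) * x K t))"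
      note x' = multilinear_form_normalise_arg[OF T Suc.prems(2) K pp[rule_format, OF K] \<nu>_def[symmetric] \<nu>0,
          folded x'_def]
      have "\<forall>j. K \<le> j \<and> j < m \<longrightarrow> lp_norm (p j) (x' j) \<le> 1"
        using Suc.prems(3) x'(2) unfolding x'_def by (auto simp: le_Suc_eq)
      then have "norm (T x') \<le> form_norm m p T * (\<Prod>j<K. lp_norm (p j) (x' j))"
        using Suc.IH[of x'] Suc.prems(1) x'(1) by simp
      also have "(\<Prod>j<K. lp_norm (p j) (x' j)) = (\<Prod>j<K. lp_norm (p j) (x j))"
        unfolding x'_def by (intro prod.cong) auto
      finally show ?thesis using x'(3) \<nu>0 by (simp add: \<nu>_def mult_left_mono mult_ac)
    qed
  qed
  then show ?thesis using x by simp
qed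

section \<open>The upper estimate\<close>

definition units_from ::
  "nat \<Rightarrow> nat \<Rightarrow> (nat \<Rightarrow> nat \<Rightarrow> 'k::real_normed_field) \<Rightarrow> (nat \<Rightarrow> nat) \<Rightarrow> nat \<Rightarrow> nat \<Rightarrow> 'k" where
  "units_from m k x idx = (\<lambda>j. if k \<le> j \<and> j < m then unit_vec (idx j) else x j)"

lemma units_from_in_multi_dom: "x \<in> multi_dom m p \<Longrightarrow> units_from m k x idx \<in> multi_dom m p"
  unfolding multi_dom_def units_from_def by (auto simp: lp_mem_unit_vec)

lemma units_from_m: "units_from m m x idx = x"
  unfolding units_from_def by (rule ext) auto

lemma units_from_0: "units_from m 0 (\<lambda>j t. 0) idx = unit_args m idx"
  unfolding units_from_def unit_args_def by (auto simp: fun_eq_iff)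

lemma units_from_Suc: "k < m \<Longrightarrow> units_from m k x idx = units_from m (Suc k) (x(k := unit_vec (idx k))) idx"
  unfolding units_from_def by (auto simp: fun_eq_iff)

lemma units_from_upd: "units_from m (Suc k) (x(k := v)) idx = (units_from m (Suc k) x idx)(k := v)"
  unfolding units_from_def by (auto simp: fun_eq_iff)

lemma units_from_cong: "\<forall>l\<ge>k. idx l = idx' l \<Longrightarrow> units_from m k x idx = units_from m k x idx'"
  unfolding units_from_def by (auto simp: fun_eq_iff)

lemma units_from_finite_comb:
  fixes T :: "(nat \<Rightarrow> nat \<Rightarrow> 'k::real_normed_field) \<Rightarrow> 'k"
  assumes T: "multilinear_form m p T" and x: "x \<in> multi_dom m p" and k: "k < m"
  shows "T (units_from m (Suc k) (x(k := finite_comb c N)) idx)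
           = (\<Sum>i<N. c i * T (units_from m (Suc k) (x(k := unit_vec i)) idx))"
  unfolding units_from_upd
  by (rule multilinear_form_finite_comb[OF T units_from_in_multi_dom[OF x] k])

text \<open>The mixed \<open>(d\<^sub>k, \<dots>, d\<^sub>m\<^sub>-\<^sub>1)\<close> inequality for \<open>T\<close> with its first \<open>k\<close> arguments
  frozen; it is proved by downward induction on \<open>k\<close>, starting from the trivial case \<open>k = m\<close>.\<close>
definition tail_estimate ::
  "nat \<Rightarrow> (nat \<Rightarrow> real) \<Rightarrow> (nat \<Rightarrow> real) \<Rightarrow> (nat \<Rightarrow> nat)
     \<Rightarrow> ((nat \<Rightarrow> nat \<Rightarrow> 'k::real_normed_field) \<Rightarrow> 'k) \<Rightarrow> nat \<Rightarrow> bool" where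
  "tail_estimate m p d n T k \<longleftrightarrow>
     (\<forall>x\<in>multi_dom m p. \<forall>idx.
        mixed_norm d n (\<lambda>ix. norm (T (units_from m k x ix))) (m - k) k idx
          \<le> form_norm m p T * (\<Prod>j<k. lp_norm (p j) (x j)))"

lemma tail_estimate_m:
  fixes T :: "(nat \<Rightarrow> nat \<Rightarrow> 'k::real_normed_field) \<Rightarrow> 'k"
  assumes "bounded_multilinear_form m p T" "\<forall>j<m. 0 < p j"
  shows "tail_estimate m p d n T m"
  unfolding tail_estimate_def using norm_le_form_norm_prod[OF assms] by (simp add: units_from_m)

definition tail_norm ::
  "nat \<Rightarrow> (nat \<Rightarrow> real) \<Rightarrow> (nat \<Rightarrow> nat) \<Rightarrow> ((nat \<Rightarrow> nat \<Rightarrow> 'k::real_normed_field) \<Rightarrow> 'k)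
     \<Rightarrow> (nat \<Rightarrow> nat \<Rightarrow> 'k) \<Rightarrow> nat \<Rightarrow> (nat \<Rightarrow> nat) \<Rightarrow> nat \<Rightarrow> real" where
  "tail_norm m d n T x k idx i =
     mixed_norm d n (\<lambda>ix. norm (T (units_from m (Suc k) (x(k := unit_vec i)) ix))) (m - Suc k) (Suc k) idx"

lemma tail_norm_nonneg: "0 \<le> tail_norm m d n T x k idx i"
  unfolding tail_norm_def by (rule mixed_norm_nonneg) simp

lemma mixed_norm_units_from_Suc:
  assumes "k < m"
  shows "mixed_norm d n (\<lambda>ix. norm (T (units_from m k x ix))) (m - k) k idx
       = (\<Sum>i<n k. tail_norm m d n T x k idx i powr d k) powr (1 / d k)"
proof -
  have mk: "m - k = Suc (m - Suc k)" using assms by simp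
  have "mixed_norm d n (\<lambda>ix. norm (T (units_from m k x ix))) (m - Suc k) (Suc k) (idx(k := i))
      = mixed_norm d n (\<lambda>ix. norm (T (units_from m (Suc k) (x(k := unit_vec i)) ix))) (m - Suc k) (Suc k) (idx(k := i))"
    for i
    using units_from_Suc[OF assms, of x] by (intro mixed_norm_cong) auto
  also have "\<dots> i = tail_norm m d n T x k idx i" for i
    unfolding tail_norm_def
  proof (rule mixed_norm_prefix_irrelevant[of "Suc k"])
    fix ix iy :: "nat \<Rightarrow> nat" assume "\<forall>l\<ge>Suc k. ix l = iy l"
    then show "norm (T (units_from m (Suc k) (x(k := unit_vec i)) ix))
        = norm (T (units_from m (Suc k) (x(k := unit_vec i)) iy))"
      by (simp only: units_from_cong[of "Suc k" ix iy])
  qed auto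
  finally show ?thesis unfolding mk by simp
qed

lemma tail_estimate_finite_comb:
  fixes T :: "(nat \<Rightarrow> nat \<Rightarrow> 'k::real_normed_field) \<Rightarrow> 'k"
  assumes est: "tail_estimate m p d n T (Suc k)" and pk: "0 < p k" and k: "k < m"
    and x: "x \<in> multi_dom m p" and c: "\<And>i. i < N \<Longrightarrow> norm (c i) \<le> l i" and l: "(\<Sum>i<N. l i powr p k) \<le> 1"
    and T: "bounded_multilinear_form m p T"
  shows "mixed_norm d n (\<lambda>ix. norm (T (units_from m (Suc k) (x(k := finite_comb c N)) ix))) (m - Suc k) (Suc k) idx
           \<le> form_norm m p T * (\<Prod>j<k. lp_norm (p j) (x j))"
proof -
  have "x(k := finite_comb c N) \<in> multi_dom m p"
    using x k by (intro multi_dom_upd lp_mem_finite_comb)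
  from est[unfolded tail_estimate_def, rule_format, OF this, of idx]
  have "mixed_norm d n (\<lambda>ix. norm (T (units_from m (Suc k) (x(k := finite_comb c N)) ix))) (m - Suc k) (Suc k) idx
      \<le> form_norm m p T * (\<Prod>j<Suc k. lp_norm (p j) ((x(k := finite_comb c N)) j))" .
  also have "\<dots> = form_norm m p T * (\<Prod>j<k. lp_norm (p j) (x j)) * lp_norm (p k) (finite_comb c N)"
    by (simp add: lessThan_Suc mult_ac)
  also have "\<dots> \<le> form_norm m p T * (\<Prod>j<k. lp_norm (p j) (x j))"
    using lp_norm_finite_comb_le_1[OF pk c l] form_norm_nonneg[OF T]
    by (intro mult_left_le mult_nonneg_nonneg prod_nonneg) (auto simp: lp_norm_nonneg)
  finally show ?thesis .
qed

text \<open>With \<open>A\<^sub>i\<close> the tail norms, the hypothesis \<open>Bc\<close>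
  bounds the \<open>\<ell>\<^sub>c\<close>-norm of \<open>(l\<^sub>i A\<^sub>i)\<close> uniformly over the unit ball of \<open>\<ell>\<^bsub>p\<^sub>k\<^esub>\<close>;
  by duality \<open>A\<close> is then bounded in \<open>\<ell>\<^sub>b\<close> with \<open>1/b = 1/c - 1/p\<^sub>k\<close>, and, since every
  \<open>A\<^sub>i\<close> is already bounded by the induction hypothesis, also in \<open>\<ell>\<^bsub>d\<^sub>k\<^esub>\<close> for \<open>d\<^sub>k \<ge> b\<close>.\<close>
lemma tail_estimate_step:
  fixes T :: "(nat \<Rightarrow> nat \<Rightarrow> 'k::real_normed_field) \<Rightarrow> 'k"
  assumes B: "bounded_multilinear_form m p T" and km: "k < m"
    and est: "tail_estimate m p d n T (Suc k)"
    and c: "0 < c" "c < p k" "c * p k / (p k - c) \<le> d k"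
    and Bc: "\<And>x idx l. x \<in> multi_dom m p \<Longrightarrow> \<forall>i<n k. 0 \<le> l i \<Longrightarrow> (\<Sum>i<n k. l i powr p k) \<le> 1 \<Longrightarrow>
        (\<Sum>i<n k. (l i * tail_norm m d n T x k idx i) powr c)
          \<le> (form_norm m p T * (\<Prod>j<k. lp_norm (p j) (x j))) powr c"
  shows "tail_estimate m p d n T k"
  unfolding tail_estimate_def
proof (intro ballI allI)
  fix x :: "nat \<Rightarrow> nat \<Rightarrow> 'k" and idx assume x: "x \<in> multi_dom m p"
  define C where "C = form_norm m p T * (\<Prod>j<k. lp_norm (p j) (x j))"
  have C0: "0 \<le> C" unfolding C_def using form_norm_nonneg[OF B]
    by (intro mult_nonneg_nonneg prod_nonneg) (auto simp: lp_norm_nonneg)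
  have "0 < c * p k / (p k - c)" using c by simp
  with c(3) have dk: "0 < d k" by linarith
  define A where "A i = tail_norm m d n T x k idx i" for i
  have A_le: "A i \<le> C" for i
  proof -
    have "x(k := unit_vec i) \<in> multi_dom m p" using x km by (intro multi_dom_upd lp_mem_unit_vec)
    then have "A i \<le> form_norm m p T * (\<Prod>j<Suc k. lp_norm (p j) ((x(k := unit_vec i)) j))"
      using est unfolding A_def tail_norm_def tail_estimate_def by blast
    then show ?thesis unfolding C_def by (simp add: lessThan_Suc lp_norm_unit_vec)
  qed
  have "(\<Sum>i<n k. A i powr (c * p k / (p k - c))) \<le> C powr (c * p k / (p k - c))"
  proof (rule dual_exponent_bound[OF finite_lessThan c(1,2) _ C0])
    show "\<forall>i\<in>{..<n k}. 0 \<le> A i" by (simp add: A_def tail_norm_nonneg)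
    fix l assume "\<forall>i\<in>{..<n k}. 0 \<le> l i" "(\<Sum>i\<in>{..<n k}. l i powr p k) \<le> 1"
    then show "(\<Sum>i\<in>{..<n k}. (l i * A i) powr c) \<le> C powr c"
      unfolding A_def C_def by (intro Bc[OF x]) auto
  qed
  then have "(\<Sum>i<n k. A i powr d k) \<le> C powr d k"
    by (rule sum_powr_le_powr_larger_exponent[rotated 4])
      (use c A_le in \<open>auto simp: A_def tail_norm_nonneg\<close>)
  then have "(\<Sum>i<n k. A i powr d k) powr (1 / d k) \<le> (C powr d k) powr (1 / d k)"
    using dk by (intro powr_mono2) (auto intro: sum_nonneg)
  also have "\<dots> = C" using dk C0 by (simp add: powr_powr)
  finally show "mixed_norm d n (\<lambda>ix. norm (T (units_from m k x ix))) (m - k) k idx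
      \<le> form_norm m p T * (\<Prod>j<k. lp_norm (p j) (x j))"
    unfolding mixed_norm_units_from_Suc[OF km] A_def C_def .
qed

text \<open>The weighted bound for the last argument, with \<open>c = 1\<close>: the coefficients are chosen
  with the phases of the values of \<open>T\<close>, so that no cancellation occurs.\<close>
lemma tail_weighted_bound_last:
  fixes T :: "(nat \<Rightarrow> nat \<Rightarrow> 'k::real_normed_field) \<Rightarrow> 'k"
  assumes B: "bounded_multilinear_form m p T" and pk: "0 < p k" and km: "Suc k = m"
    and est: "tail_estimate m p d n T (Suc k)"
    and x: "x \<in> multi_dom m p" and l: "\<forall>i<n k. 0 \<le> l i" "(\<Sum>i<n k. l i powr p k) \<le> 1"
  shows "(\<Sum>i<n k. (l i * tail_norm m d n T x k idx i) powr 1)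
           \<le> (form_norm m p T * (\<Prod>j<k. lp_norm (p j) (x j))) powr 1"
proof -
  have T: "multilinear_form m p T" using B unfolding bounded_multilinear_form_def by simp
  have k: "k < m" using km by simp
  define w where "w i = T (x(k := unit_vec i))" for i
  have tail_w: "tail_norm m d n T x k idx i = norm (w i)" for i
    unfolding tail_norm_def w_def using km by (simp add: units_from_m)
  define u where "u i = (if w i = 0 then 0 else of_real (norm (w i)) / w i)" for i
  define c where "c i = of_real (l i) * u i" for i
  have cw: "c i * w i = of_real (l i * norm (w i))" for i
    unfolding c_def u_def by auto
  have norm_c: "norm (c i) \<le> l i" if "i < n k" for i
    using l that unfolding c_def u_def by (auto simp: norm_mult norm_divide)
  have "(\<Sum>i<n k. c i * w i) = of_real (\<Sum>i<n k. l i * norm (w i))"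
    unfolding cw by (rule of_real_sum[symmetric])
  then have "norm (\<Sum>i<n k. c i * w i) = \<bar>\<Sum>i<n k. l i * norm (w i)\<bar>"
    by (simp only: norm_of_real)
  moreover have "0 \<le> (\<Sum>i<n k. l i * norm (w i))" using l by (intro sum_nonneg) auto
  ultimately have "(\<Sum>i<n k. l i * norm (w i)) = norm (\<Sum>i<n k. c i * w i)" by simp
  also have "\<dots> = norm (T (units_from m (Suc k) (x(k := finite_comb c (n k))) idx))"
    unfolding units_from_finite_comb[OF T x k] using km by (simp add: units_from_m w_def)
  also have "\<dots> \<le> form_norm m p T * (\<Prod>j<k. lp_norm (p j) (x j))"
    using tail_estimate_finite_comb[OF est pk k x norm_c l(2) B, of idx] km by simp
  finally show ?thesis using l form_norm_nonneg[OF B] unfolding tail_w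
    by (simp add: prod_nonneg lp_norm_nonneg)
qed

text \<open>The weighted bound for the other arguments, with \<open>c = d\<^sub>k\<^sub>+\<^sub>1\<close>: choosing signs by
  the cotype inequality for the remaining mixed norm.\<close>
lemma tail_weighted_bound_cotype:
  fixes T :: "(nat \<Rightarrow> nat \<Rightarrow> 'k::{real_normed_field,real_inner}) \<Rightarrow> 'k"
  assumes B: "bounded_multilinear_form m p T" and pk: "0 < p k" and km: "Suc k < m"
    and est: "tail_estimate m p d n T (Suc k)"
    and d: "\<And>j. Suc k \<le> j \<Longrightarrow> j < m \<Longrightarrow> 2 \<le> d j \<and> d j \<le> d (Suc k)"
    and x: "x \<in> multi_dom m p" and l: "\<forall>i<n k. 0 \<le> l i" "(\<Sum>i<n k. l i powr p k) \<le> 1"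
  shows "(\<Sum>i<n k. (l i * tail_norm m d n T x k idx i) powr d (Suc k))
           \<le> (form_norm m p T * (\<Prod>j<k. lp_norm (p j) (x j))) powr d (Suc k)"
proof -
  have T: "multilinear_form m p T" using B unfolding bounded_multilinear_form_def by simp
  have k: "k < m" using km by simp
  define q where "q = d (Suc k)"
  have q: "2 \<le> q" unfolding q_def using d[of "Suc k"] km by auto
  define W where "W i ix = of_real (l i) * T (units_from m (Suc k) (x(k := unit_vec i)) ix)" for i ix
  obtain \<epsilon> where \<epsilon>: "\<forall>i<n k. \<epsilon> i = 1 \<or> \<epsilon> i = -1"
    and cotype: "(\<Sum>i<n k. mixed_norm d n (\<lambda>ix. norm (W i ix)) (m - Suc k) (Suc k) idx powr q) powr (1/q)
     \<le> mixed_norm d n (\<lambda>ix. norm (\<Sum>i<n k. \<epsilon> i *\<^sub>R W i ix)) (m - Suc k) (Suc k) idx"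
    using mixed_norm_cotype[OF q, where j = "Suc k" and K = "m - Suc k" and e = d and n = n
        and N = "n k" and W = W and idx = idx] d km
    unfolding q_def by auto
  have norm_W: "mixed_norm d n (\<lambda>ix. norm (W i ix)) (m - Suc k) (Suc k) idx = l i * tail_norm m d n T x k idx i"
    if "i < n k" for i
    unfolding W_def tail_norm_def using l that d
    by (simp add: norm_mult, intro mixed_norm_scale) (auto, fastforce)
  define c where "c i = (of_real (\<epsilon> i * l i) :: 'k)" for i
  have norm_c: "norm (c i) \<le> l i" if "i < n k" for i
    using \<epsilon> l that unfolding c_def by (auto simp: norm_mult)
  have signed_sum: "(\<Sum>i<n k. \<epsilon> i *\<^sub>R W i ix) = T (units_from m (Suc k) (x(k := finite_comb c (n k))) ix)"
    for ix
    unfolding units_from_finite_comb[OF T x k] c_def W_def by (simp add: scaleR_conv_of_real mult.assoc)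
  have "(\<Sum>i<n k. (l i * tail_norm m d n T x k idx i) powr q)
      = (\<Sum>i<n k. mixed_norm d n (\<lambda>ix. norm (W i ix)) (m - Suc k) (Suc k) idx powr q)"
    using norm_W by simp
  then have "(\<Sum>i<n k. (l i * tail_norm m d n T x k idx i) powr q) powr (1/q)
      \<le> mixed_norm d n (\<lambda>ix. norm (\<Sum>i<n k. \<epsilon> i *\<^sub>R W i ix)) (m - Suc k) (Suc k) idx"
    using cotype by simp
  also have "\<dots> \<le> form_norm m p T * (\<Prod>j<k. lp_norm (p j) (x j))"
    unfolding signed_sum by (rule tail_estimate_finite_comb[OF est pk k x norm_c l(2) B])
  finally
  have "((\<Sum>i<n k. (l i * tail_norm m d n T x k idx i) powr q) powr (1/q)) powr q
      \<le> (form_norm m p T * (\<Prod>j<k. lp_norm (p j) (x j))) powr q"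
    using q by (intro powr_mono2) auto
  then show ?thesis using q unfolding q_def[symmetric]
    by (simp add: powr_powr sum_nonneg)
qed

definition recip_sum :: "(nat \<Rightarrow> real) \<Rightarrow> nat \<Rightarrow> nat \<Rightarrow> real" where
  "recip_sum p k m = (\<Sum>j\<in>{k..<m}. 1 / p j)"

lemma hb_delta_recip_sum: "hb_delta p k m = 1 / (1 - recip_sum p k m)"
  unfolding hb_delta_def recip_sum_def ..

locale hb_exponents =
  fixes m :: nat and p :: "nat \<Rightarrow> real"
  assumes m_ge_2: "2 \<le> m" and p_last: "1 < p (m - 1)" "p (m - 1) \<le> 2"
    and p_other: "\<forall>j<m - 1. 2 < p j" and sum_recip_lt_1: "(\<Sum>j<m. 1 / p j) < 1"
begin

lemma p_pos:
  assumes "j < m"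
  shows "0 < p j"
proof (cases "j < m - 1")
  case True then show ?thesis using p_other by force
next
  case False then have "j = m - 1" using assms by linarith
  then show ?thesis using p_last by simp
qed

lemma recip_sum_lt_1: "recip_sum p k m < 1"
proof -
  have "recip_sum p k m \<le> (\<Sum>j<m. 1 / p j)"
    unfolding recip_sum_def using p_pos by (intro sum_mono2) (auto simp: less_imp_le)
  then show ?thesis using sum_recip_lt_1 by simp
qed

lemma recip_sum_antimono: "k \<le> l \<Longrightarrow> recip_sum p l m \<le> recip_sum p k m"
  unfolding recip_sum_def using p_pos by (intro sum_mono2) (auto simp: less_imp_le)

lemma recip_sum_Suc: "k < m \<Longrightarrow> recip_sum p k m = 1 / p k + recip_sum p (Suc k) m"
  unfolding recip_sum_def by (simp add: sum.atLeast_Suc_lessThan)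

abbreviation delta :: "nat \<Rightarrow> real" where
  "delta k \<equiv> hb_delta p k m"

lemma delta_last: "delta (m - 1) = 1 * p (m - 1) / (p (m - 1) - 1)"
proof -
  have last: "recip_sum p (m - 1) m = 1 / p (m - 1)"
    using m_ge_2 recip_sum_Suc[of "m - 1"] by (simp add: recip_sum_def)
  show ?thesis unfolding hb_delta_recip_sum last using p_last by (simp add: field_simps)
qed

lemma delta_ge_2: "k < m \<Longrightarrow> 2 \<le> delta k"
proof -
  assume "k < m"
  then have "1 / p (m - 1) \<le> recip_sum p k m"
    unfolding recip_sum_def using p_pos m_ge_2 by (intro member_le_sum) (auto simp: less_imp_le)
  moreover have "1/2 \<le> 1 / p (m - 1)" using p_last by (simp add: field_simps)
  ultimately show ?thesis
    unfolding hb_delta_recip_sum using recip_sum_lt_1[of k] by (simp add: field_simps)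
qed

lemma delta_antimono: "k \<le> l \<Longrightarrow> delta l \<le> delta k"
  unfolding hb_delta_recip_sum using recip_sum_antimono recip_sum_lt_1
  by (intro divide_left_mono) (auto simp: less_imp_le)

text \<open>The recursion \<open>1 / delta k = 1 / delta (Suc k) - 1 / p k\<close>, in the form needed for
  the induction step with \<open>c = delta (Suc k)\<close>.\<close>
lemma delta_Suc: "Suc k < m \<Longrightarrow> delta (Suc k) < p k \<and> delta (Suc k) * p k / (p k - delta (Suc k)) = delta k"
proof -
  assume k: "Suc k < m"
  define s where "s = recip_sum p (Suc k) m"
  have pk: "0 < p k" using p_pos k by simp
  have sk: "recip_sum p k m = 1 / p k + s" unfolding s_def using k by (intro recip_sum_Suc) auto
  have s1: "1 / p k + s < 1" using recip_sum_lt_1[of k] sk by simp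
  define q where "q = (1 - s) * p k - 1"
  have q0: "0 < q" unfolding q_def using s1 pk by (simp add: field_simps)
  have u0: "0 < 1 - s" using s1 pk by (smt (verit) divide_pos_pos)
  have e1: "p k - 1 / (1 - s) = q / (1 - s)" unfolding q_def using u0 by (simp add: field_simps)
  have e2: "1 - (1 / p k + s) = q / p k" unfolding q_def using pk by (simp add: field_simps)
  have "1 / (1 - s) < p k" using q0 u0 e1 by (smt (verit) divide_pos_pos)
  moreover have "1 / (1 - s) * p k / (p k - 1 / (1 - s)) = 1 / (1 - (1 / p k + s))"
    unfolding e1 e2 using u0 q0 pk by (simp add: field_simps)
  ultimately show ?thesis unfolding hb_delta_recip_sum sk s_def[symmetric] by simp
qed

lemma tail_estimate_delta:
  fixes T :: "(nat \<Rightarrow> nat \<Rightarrow> 'k::{real_normed_field,real_inner}) \<Rightarrow> 'k"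
  assumes B: "bounded_multilinear_form m p T" and "k \<le> m"
  shows "tail_estimate m p delta n T k"
  using \<open>k \<le> m\<close>
proof (induction k rule: inc_induct)
  case base
  show ?case using tail_estimate_m[OF B] p_pos by blast
next
  case (step k)
  have pk: "0 < p k" using p_pos step.hyps(2) .
  show ?case
  proof (cases "Suc k = m")
    case True
    then have "k = m - 1" by simp
    show ?thesis
    proof (rule tail_estimate_step[OF B step.hyps(2) step.IH, of 1])
      show "0 < (1::real)" "1 < p k" "1 * p k / (p k - 1) \<le> delta k"
        using delta_last p_last \<open>k = m - 1\<close> by auto
      fix x :: "nat \<Rightarrow> nat \<Rightarrow> 'k" and idx l assume "x \<in> multi_dom m p" "\<forall>i<n k. 0 \<le> l i" "(\<Sum>i<n k. l i powr p k) \<le> 1"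
      then show "(\<Sum>i<n k. (l i * tail_norm m delta n T x k idx i) powr 1)
          \<le> (form_norm m p T * (\<Prod>j<k. lp_norm (p j) (x j))) powr 1"
        by (rule tail_weighted_bound_last[OF B pk True step.IH])
    qed
  next
    case False
    then have k: "Suc k < m" using step.hyps by simp
    show ?thesis
    proof (rule tail_estimate_step[OF B step.hyps(2) step.IH, of "delta (Suc k)"])
      show "0 < delta (Suc k)" "delta (Suc k) < p k" "delta (Suc k) * p k / (p k - delta (Suc k)) \<le> delta k"
        using delta_Suc[OF k] delta_ge_2[OF k] by auto
      fix x :: "nat \<Rightarrow> nat \<Rightarrow> 'k" and idx l assume "x \<in> multi_dom m p" "\<forall>i<n k. 0 \<le> l i" "(\<Sum>i<n k. l i powr p k) \<le> 1"
      then show "(\<Sum>i<n k. (l i * tail_norm m delta n T x k idx i) powr delta (Suc k))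
          \<le> (form_norm m p T * (\<Prod>j<k. lp_norm (p j) (x j))) powr delta (Suc k)"
        by (intro tail_weighted_bound_cotype[OF B pk k step.IH]) (auto intro: delta_ge_2 delta_antimono)
    qed
  qed
qed

lemma mixed_inequality:
  assumes "\<forall>k<m. 0 < r k"
  shows "HB_ineq TYPE('k::{real_normed_field,real_inner}) m p r 1 (hb_exp p r m)"
  unfolding HB_ineq_def
proof (intro allI impI)
  fix n :: "nat \<Rightarrow> nat" and T :: "(nat \<Rightarrow> nat \<Rightarrow> 'k) \<Rightarrow> 'k"
  assume n: "\<forall>k<m. 1 \<le> n k" and B: "bounded_multilinear_form m p T"
  let ?a = "\<lambda>idx. norm (T (unit_args m idx))"
  let ?P = "\<Prod>k\<in>{0..<0+m}. real (n k) powr hb_exp p r m k"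
  have delta_ineq: "mixed_norm delta n ?a m 0 (\<lambda>_. 0) \<le> form_norm m p T"
    using tail_estimate_delta[OF B le0, of n, unfolded tail_estimate_def, rule_format, OF zero_in_multi_dom]
    by (simp add: units_from_0)
  have "mixed_norm r n ?a m 0 (\<lambda>_. 0) \<le> ?P * mixed_norm delta n ?a m 0 (\<lambda>_. 0)"
    unfolding hb_exp_def using assms n delta_ge_2 by (intro mixed_norm_change_exponents) force+
  also have "\<dots> \<le> ?P * form_norm m p T"
    using delta_ineq by (intro mult_left_mono prod_nonneg) auto
  finally show "mixed_norm r n ?a m 0 (\<lambda>_. 0) \<le> 1 * form_norm m p T * (\<Prod>k<m. real (n k) powr hb_exp p r m k)"
    by (simp add: atLeast0LessThan mult.commute)
qed

end

section \<open>Optimality\<close>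

definition diag_form :: "nat \<Rightarrow> nat \<Rightarrow> nat \<Rightarrow> (nat \<Rightarrow> nat \<Rightarrow> 'k::real_normed_field) \<Rightarrow> 'k" where
  "diag_form m k M x = (\<Sum>i<M. \<Prod>j<m. x j (if j < k then 0 else i))"

lemma prod_lessThan_upd:
  fixes x :: "nat \<Rightarrow> nat \<Rightarrow> 'k::real_normed_field"
  assumes "j0 < m"
  shows "(\<Prod>j<m. (x(j0 := f)) j (g j)) = f (g j0) * (\<Prod>j\<in>{..<m} - {j0}. x j (g j))"
proof -
  have "(\<Prod>j\<in>{..<m} - {j0}. (x(j0 := f)) j (g j)) = (\<Prod>j\<in>{..<m} - {j0}. x j (g j))"
    by (intro prod.cong) auto
  then show ?thesis using assms by (subst prod.remove[of "{..<m}" j0]) auto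
qed

lemma diag_form_multilinear: "multilinear_form m p (diag_form m k M :: (nat \<Rightarrow> nat \<Rightarrow> 'k::real_normed_field) \<Rightarrow> 'k)"
  unfolding multilinear_form_def
proof (intro conjI ballI allI impI)
  fix x :: "nat \<Rightarrow> nat \<Rightarrow> 'k" and j :: nat and y :: "nat \<Rightarrow> 'k" and c :: 'k
  assume j: "j < m"
  define g where "g i l = (if l < k then 0 else i)" for i l :: nat
  define R where "R i = (\<Prod>l\<in>{..<m} - {j}. x l (g i l))" for i
  have upd: "diag_form m k M (x(j := f)) = (\<Sum>i<M. f (g i j) * R i)" for f
    unfolding diag_form_def R_def g_def[symmetric] prod_lessThan_upd[OF j] ..
  have "diag_form m k M x = diag_form m k M (x(j := x j))" by simp
  then have Tx: "diag_form m k M x = (\<Sum>i<M. x j (g i j) * R i)" unfolding upd .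
  show "diag_form m k M (x(j := (\<lambda>t. x j t + y t))) = diag_form m k M x + diag_form m k M (x(j := y))"
    unfolding Tx upd by (simp add: distrib_right sum.distrib)
  show "diag_form m k M (x(j := (\<lambda>t. c * x j t))) = c * diag_form m k M x"
    unfolding Tx upd by (simp add: sum_distrib_left mult.assoc)
qed

lemma norm_diag_form_le:
  fixes x :: "nat \<Rightarrow> nat \<Rightarrow> 'k::real_normed_field"
  shows "norm (diag_form m k M x) \<le> (\<Sum>i<M. \<Prod>j<m. norm (x j (if j < k then 0 else i)))"
  unfolding diag_form_def by (rule order_trans[OF norm_sum]) (simp add: prod_norm)

lemma diag_form_bounded:
  assumes pp: "\<forall>j<m. 0 < p j"
  shows "bounded_multilinear_form m p (diag_form m k M :: (nat \<Rightarrow> nat \<Rightarrow> 'k::real_normed_field) \<Rightarrow> 'k)"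
  unfolding bounded_multilinear_form_def
proof (intro conjI diag_form_multilinear exI ballI)
  fix x :: "nat \<Rightarrow> nat \<Rightarrow> 'k" assume x: "x \<in> multi_dom m p"
  have "norm (diag_form m k M x) \<le> (\<Sum>i<M. \<Prod>j<m. lp_norm (p j) (x j))"
    using x pp by (intro order_trans[OF norm_diag_form_le] sum_mono prod_mono)
      (auto intro: norm_le_lp_norm multi_dom_lp_mem)
  then show "norm (diag_form m k M x) \<le> real M * (\<Prod>j<m. lp_norm (p j) (x j))" by simp
qed

lemma form_norm_diag_form_le:
  assumes pp: "\<forall>j<m. 0 < p j" and k: "k < m" and M: "1 \<le> M" and s: "recip_sum p k m \<le> 1"
  shows "form_norm m p (diag_form m k M :: (nat \<Rightarrow> nat \<Rightarrow> 'k::real_normed_field) \<Rightarrow> 'k)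
           \<le> real M powr (1 - recip_sum p k m)"
  unfolding form_norm_def
proof (rule cSUP_least)
  show "{x :: nat \<Rightarrow> nat \<Rightarrow> 'k. x \<in> multi_dom m p \<and> (\<forall>j<m. lp_norm (p j) (x j) \<le> 1)} \<noteq> {}"
    using zero_in_multi_dom[of m p] by (auto simp: lp_norm_zero)
next
  fix x :: "nat \<Rightarrow> nat \<Rightarrow> 'k" assume "x \<in> {x \<in> multi_dom m p. \<forall>j<m. lp_norm (p j) (x j) \<le> 1}"
  then have x: "x \<in> multi_dom m p" and x1: "\<forall>j<m. lp_norm (p j) (x j) \<le> 1" by auto
  have coord_le_1: "norm (x j t) \<le> 1" if "j < m" for j t
    using norm_le_lp_norm[OF multi_dom_lp_mem[OF x that]] pp x1 that by (meson order_trans)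
  have "(\<Prod>j<m. norm (x j (if j < k then 0 else i))) \<le> (\<Prod>j\<in>{k..<m}. norm (x j i))" for i
  proof -
    have split: "(\<Prod>j<m. F j) = (\<Prod>j<k. F j) * (\<Prod>j\<in>{k..<m}. F j)" for F :: "nat \<Rightarrow> real"
      using k by (simp add: prod.atLeastLessThan_concat atLeast0LessThan[symmetric])
    have "(\<Prod>j<m. norm (x j (if j < k then 0 else i)))
        = (\<Prod>j<k. norm (x j 0)) * (\<Prod>j\<in>{k..<m}. norm (x j i))"
      unfolding split by (intro arg_cong2[where f = "(*)"] prod.cong) auto
    also have "\<dots> \<le> 1 * (\<Prod>j\<in>{k..<m}. norm (x j i))"
      using coord_le_1 k by (intro mult_right_mono prod_le_1 prod_nonneg) auto
    finally show ?thesis by simp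
  qed
  then have "norm (diag_form m k M x) \<le> (\<Sum>i<M. \<Prod>j\<in>{k..<m}. norm (x j i))"
    by (intro order_trans[OF norm_diag_form_le] sum_mono)
  also have "\<dots> \<le> real M powr (1 - recip_sum p k m)"
    unfolding recip_sum_def
  proof (rule sum_prod_le_card_powr[OF _ _ s[unfolded recip_sum_def] _ _ M])
    show "\<forall>j\<in>{k..<m}. (\<Sum>i<M. norm (x j i) powr p j) \<le> 1"
    proof
      fix j assume j: "j \<in> {k..<m}"
      have "(\<Sum>i<M. norm (x j i) powr p j) \<le> lp_norm (p j) (x j) powr p j"
        using j pp by (intro sum_le_lp_norm_powr multi_dom_lp_mem[OF x]) auto
      also have "\<dots> \<le> 1" using j x1 pp by (intro powr_le1) (auto simp: lp_norm_nonneg)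
      finally show "(\<Sum>i<M. norm (x j i) powr p j) \<le> 1" .
    qed
  qed (use pp in auto)
  finally show "norm (diag_form m k M x) \<le> real M powr (1 - recip_sum p k m)" .
qed

lemma diag_form_unit_args:
  assumes k: "k < m" and below: "\<forall>l<k. idx l = 0" and above: "\<forall>l. k \<le> l \<and> l < m \<longrightarrow> idx l = i'"
    and i': "i' < M"
  shows "diag_form m k M (unit_args m idx) = (1 :: 'k::real_normed_field)"
proof -
  have "(\<Prod>j<m. unit_args m idx j (if j < k then 0 else i) :: 'k) = (if i = i' then 1 else 0)" for i
  proof (cases "i = i'")
    case True
    have "\<forall>j\<in>{..<m}. unit_args m idx j (if j < k then 0 else i) = (1 :: 'k)"
      using True below above by (auto simp: unit_args_def unit_vec_def)
    then show ?thesis using True by simp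
  next
    case False
    have "(unit_args m idx k (if k < k then 0 else i) :: 'k) = 0"
      using False above k by (simp add: unit_args_def unit_vec_def)
    then have "(\<Prod>j<m. unit_args m idx j (if j < k then 0 else i) :: 'k) = 0"
      using k by (intro prod_zero) auto
    then show ?thesis using False by simp
  qed
  then show ?thesis unfolding diag_form_def using i' by simp
qed

abbreviation diag_dims :: "nat \<Rightarrow> nat \<Rightarrow> nat \<Rightarrow> nat" where
  "diag_dims k N \<equiv> (\<lambda>j. if j < k then 1 else N)"

lemma mixed_norm_diag_form_above:
  assumes "k < j" "j + K = m" "\<forall>l<k. idx l = 0" "\<forall>l. k \<le> l \<and> l < j \<longrightarrow> idx l = i'"
    and "i' < M" "M \<le> N" "\<forall>l<m. 0 < r l"
  shows "1 \<le> mixed_norm r (diag_dims k N) (\<lambda>idx. norm (diag_form m k M (unit_args m idx) :: 'k::real_normed_field)) K j idx"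
  using assms(1-4)
proof (induction K arbitrary: j idx)
  case 0
  then have "diag_form m k M (unit_args m idx) = (1 :: 'k)"
    using assms(5) by (intro diag_form_unit_args) auto
  then show ?case by simp
next
  case (Suc K)
  have "1 \<le> mixed_norm r (diag_dims k N) (\<lambda>idx. norm (diag_form m k M (unit_args m idx) :: 'k)) K (Suc j) (idx(j := i'))"
    using Suc.prems by (intro Suc.IH) auto
  also have "\<dots> \<le> mixed_norm r (diag_dims k N) (\<lambda>idx. norm (diag_form m k M (unit_args m idx) :: 'k)) (Suc K) j idx"
    using Suc.prems assms(5-7) by (intro mixed_norm_Suc_ge_term) auto
  finally show ?case .
qed

lemma mixed_norm_diag_form_at:
  assumes k: "k < m" and idx: "\<forall>l<k. idx l = 0" and M: "M \<le> N" and r: "\<forall>l<m. 0 < r l"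
  shows "real M powr (1 / r k)
           \<le> mixed_norm r (diag_dims k N) (\<lambda>idx. norm (diag_form m k M (unit_args m idx) :: 'k::real_normed_field)) (m - k) k idx"
proof -
  have "m - k = Suc (m - Suc k)" using k by simp
  moreover have "real M powr (1 / r k)
      \<le> mixed_norm r (diag_dims k N) (\<lambda>idx. norm (diag_form m k M (unit_args m idx) :: 'k)) (Suc (m - Suc k)) k idx"
  proof (rule mixed_norm_Suc_ge_card)
    fix i assume "i < M"
    then show "1 \<le> mixed_norm r (diag_dims k N) (\<lambda>idx. norm (diag_form m k M (unit_args m idx) :: 'k))
        (m - Suc k) (Suc k) (idx(k := i))"
      using k M r idx by (intro mixed_norm_diag_form_above[where i' = i]) (auto simp: less_Suc_eq)
  qed (use k M r in auto)
  ultimately show ?thesis by simp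
qed

lemma mixed_norm_diag_form_lower:
  assumes k: "k < m" and M: "M \<le> N" and r: "\<forall>l<m. 0 < r l"
  shows "real M powr (1 / r k)
           \<le> mixed_norm r (diag_dims k N) (\<lambda>idx. norm (diag_form m k M (unit_args m idx) :: 'k::real_normed_field)) m 0 (\<lambda>_. 0)"
proof -
  have "\<forall>idx. (\<forall>l<j. idx l = 0) \<longrightarrow> real M powr (1 / r k)
      \<le> mixed_norm r (diag_dims k N) (\<lambda>idx. norm (diag_form m k M (unit_args m idx) :: 'k)) (m - j) j idx"
    if "j \<le> k" for j
    using that
  proof (induction j rule: inc_induct)
    case base
    then show ?case using mixed_norm_diag_form_at[OF k _ M r] by blast
  next
    case (step j)
    show ?case
    proof (intro allI impI)
      fix idx :: "nat \<Rightarrow> nat" assume idx: "\<forall>l<j. idx l = 0"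
      have mj: "m - j = Suc (m - Suc j)" using step.hyps k by simp
      have "real M powr (1 / r k)
          \<le> mixed_norm r (diag_dims k N) (\<lambda>idx. norm (diag_form m k M (unit_args m idx) :: 'k))
               (m - Suc j) (Suc j) (idx(j := 0))"
        using step.IH idx by (simp add: less_Suc_eq)
      also have "\<dots> \<le> mixed_norm r (diag_dims k N) (\<lambda>idx. norm (diag_form m k M (unit_args m idx) :: 'k))
               (Suc (m - Suc j)) j idx"
        using step.hyps k r by (intro mixed_norm_Suc_ge_term) auto
      finally show "real M powr (1 / r k)
          \<le> mixed_norm r (diag_dims k N) (\<lambda>idx. norm (diag_form m k M (unit_args m idx) :: 'k)) (m - j) j idx"
        unfolding mj .
    qed
  qed
  from this[of 0] show ?thesis by simp
qed

context hb_exponents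
begin

lemma HB_ineq_diag_form:
  assumes HB: "HB_ineq TYPE('k::real_normed_field) m p r D ((hb_exp p r m)(k := s'))"
    and r: "\<forall>j<m. 0 < r j" and k: "k < m" and r_large: "\<forall>j. k < j \<and> j < m \<longrightarrow> delta j \<le> r j"
    and M: "1 \<le> M" "M \<le> N"
  shows "real M powr (1 / r k) \<le> D * (real M powr (1 - recip_sum p k m) * real N powr s')"
proof -
  define T where "T = (diag_form m k M :: (nat \<Rightarrow> nat \<Rightarrow> 'k) \<Rightarrow> 'k)"
  have T: "bounded_multilinear_form m p T" unfolding T_def using p_pos by (intro diag_form_bounded) auto
  have exps: "hb_exp p r m j = 0" if "k < j" "j < m" for j
    using r_large that delta_ge_2[of j] unfolding hb_exp_def by (simp add: frac_le)
  have "(\<Prod>j<m. real (diag_dims k N j) powr ((hb_exp p r m)(k := s')) j) = (\<Prod>j<m. if j = k then real N powr s' else 1)"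
    using exps M by (intro prod.cong) auto
  also have "\<dots> = real N powr s'" using k by (simp add: prod.delta)
  finally have prod_exps: "(\<Prod>j<m. real (diag_dims k N j) powr ((hb_exp p r m)(k := s')) j) = real N powr s'" .
  have "mixed_norm r (diag_dims k N) (\<lambda>idx. norm (T (unit_args m idx))) m 0 (\<lambda>_. 0)
      \<le> D * form_norm m p T * (\<Prod>j<m. real (diag_dims k N j) powr ((hb_exp p r m)(k := s')) j)"
    using M by (intro HB[unfolded HB_ineq_def, rule_format, OF _ T]) auto
  then have "mixed_norm r (diag_dims k N) (\<lambda>idx. norm (T (unit_args m idx))) m 0 (\<lambda>_. 0)
      \<le> D * form_norm m p T * real N powr s'"
    unfolding prod_exps .
  then have upper: "real M powr (1 / r k) \<le> D * form_norm m p T * real N powr s'"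
    using mixed_norm_diag_form_lower[OF k M(2) r] unfolding T_def by (rule order_trans[rotated])
  have fn: "0 \<le> form_norm m p T" "form_norm m p T \<le> real M powr (1 - recip_sum p k m)"
    using form_norm_nonneg[OF T] p_pos recip_sum_lt_1[of k] unfolding T_def
    by (auto intro!: form_norm_diag_form_le[OF _ k M(1)] simp: less_imp_le)
  have "0 \<le> D"
  proof (rule ccontr)
    assume "\<not> 0 \<le> D"
    then have "D * form_norm m p T * real N powr s' \<le> 0"
      using fn by (simp add: mult_nonneg_nonneg mult_nonpos_nonneg)
    moreover have "0 < real M powr (1 / r k)" using M by simp
    ultimately show False using upper by linarith
  qed
  then have "D * form_norm m p T * real N powr s' \<le> D * (real M powr (1 - recip_sum p k m) * real N powr s')"
    using fn by (simp add: mult.assoc mult_left_mono mult_right_mono)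
  then show ?thesis using upper by simp
qed

lemma exponent_optimal:
  assumes r: "\<forall>j<m. 0 < r j" and k: "k < m" and r_large: "\<forall>j. k < j \<and> j < m \<longrightarrow> delta j \<le> r j"
    and s': "s' < hb_exp p r m k"
  shows "\<not> (\<exists>D. HB_ineq TYPE('k::real_normed_field) m p r D ((hb_exp p r m)(k := s')))"
proof
  assume "\<exists>D. HB_ineq TYPE('k) m p r D ((hb_exp p r m)(k := s'))"
  then obtain D where HB: "HB_ineq TYPE('k) m p r D ((hb_exp p r m)(k := s'))" by blast
  note growth = HB_ineq_diag_form[OF HB r k r_large]
  define w where "w = 1 - recip_sum p k m"
  have hb: "hb_exp p r m k = max (1 / r k - w) 0"
    unfolding hb_exp_def w_def hb_delta_recip_sum by simp
  \<comment> \<open>take \<open>M = N\<close> if the exponent is positive, and \<open>M = 1\<close> otherwise\<close>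
  obtain e where e: "0 < e" "\<And>N. 1 \<le> N \<Longrightarrow> real N powr e \<le> D"
  proof (cases "0 < 1 / r k - w")
    case True
    show ?thesis
    proof (rule that[of "1 / r k - w - s'"])
      show "0 < 1 / r k - w - s'" using True s' hb by simp
      fix N :: nat assume N: "1 \<le> N"
      have "real N powr (1 / r k - w - s') * (real N powr w * real N powr s') = real N powr (1 / r k)"
        by (simp add: powr_add[symmetric])
      also have "\<dots> \<le> D * (real N powr w * real N powr s')" using growth[OF N order.refl] by (simp add: w_def)
      finally show "real N powr (1 / r k - w - s') \<le> D" using N by simp
    qed
  next
    case False
    show ?thesis
    proof (rule that[of "- s'"])
      show "0 < - s'" using False s' hb by simp
      fix N :: nat assume N: "1 \<le> N"
      have "real N powr (- s') * 1 \<le> real N powr (- s') * (D * real N powr s')"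
        using growth[OF order.refl N] by (intro mult_left_mono) auto
      also have "\<dots> = D" using N by (simp add: powr_add[symmetric] mult.left_commute)
      finally show "real N powr (- s') \<le> D" by simp
    qed
  qed
  obtain N :: nat where "1 \<le> N" "D < real N powr e" using real_nat_powr_unbounded[OF e(1)] by blast
  then show False using e(2) by fastforce
qed

end

theorem mainTheorem6:
  fixes m :: nat and p r :: "nat \<Rightarrow> real"
  assumes "m \<ge> 2"
    and "\<forall>j<m. 0 < r j"
    and "1 < p (m - 1)" and "p (m - 1) \<le> 2"
    and "\<forall>j<m - 1. 2 < p j"
    and "(\<Sum>j<m. 1 / p j) < 1"
  shows "(\<exists>D\<ge>1. HB_ineq TYPE(real) m p r D (hb_exp p r m))
       \<and> (\<forall>k<m. (\<forall>j. k < j \<and> j < m \<longrightarrow> hb_delta p j m \<le> r j) \<longrightarrow>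
            (\<forall>s'. s' < hb_exp p r m k \<longrightarrow>
               \<not> (\<exists>D. HB_ineq TYPE(real) m p r D ((hb_exp p r m)(k := s')))))
       \<and> (\<exists>D\<ge>1. HB_ineq TYPE(complex) m p r D (hb_exp p r m))
       \<and> (\<forall>k<m. (\<forall>j. k < j \<and> j < m \<longrightarrow> hb_delta p j m \<le> r j) \<longrightarrow>
            (\<forall>s'. s' < hb_exp p r m k \<longrightarrow>
               \<not> (\<exists>D. HB_ineq TYPE(complex) m p r D ((hb_exp p r m)(k := s')))))"
proof -
  interpret hb_exponents m p by unfold_locales (use assms in auto)
  show ?thesis
    using mixed_inequality[OF assms(2), where 'k = real] mixed_inequality[OF assms(2), where 'k = complex]
      exponent_optimal[OF assms(2), where 'k = real] exponent_optimal[OF assms(2), where 'k = complex]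
    by blast
qed

end
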